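(* Let $r\geq 1$ be an integer. There exists $n_0$ such that for every $n\geq n_0$ with $(r+1)\mid n$, the following holds, where $F = \frac{n}{r+1}K_{r+1}$ is the disjoint union of $n/(r+1)$ copies of $K_{r+1}$: if $G$ is an $n$-vertex graph not containing $F$ as a subgraph, then $\lambda(G) \leq \lambda(H_{n,r})$, with equality if and only if $G \cong H_{n,r}$.
   Context: All graphs are finite and simple. $\lambda(G)$ denotes the largest eigenvalue of the adjacency matrix of $G$. For integers $n>m\geq 1$, $H_{n,m} = K_{m-1} \vee (K_{n-m} \cup K_1)$, i.e. an $(n-1)$-clique plus one vertex adjacent to exactly $m-1$ vertices of the clique ($\vee$ is the join, $\cup$ the disjoint union). *)

theory Defs
  imports "Jordan_Normal_Form.Char_Poly"
begin

definition simple_graph :: "nat \<Rightarrow> (nat \<Rightarrow> nat \<Rightarrow> bool) \<Rightarrow> bool" where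
  "simple_graph n E \<longleftrightarrow> (\<forall>i j. E i j \<longrightarrow> E j i) \<and> (\<forall>i. \<not> E i i)
      \<and> (\<forall>i j. E i j \<longrightarrow> i < n \<and> j < n)"

definition adj_mat :: "nat \<Rightarrow> (nat \<Rightarrow> nat \<Rightarrow> bool) \<Rightarrow> real mat" where
  "adj_mat n E = mat n n (\<lambda>(i, j). if E i j then 1 else 0)"

definition lambda_max :: "nat \<Rightarrow> (nat \<Rightarrow> nat \<Rightarrow> bool) \<Rightarrow> real" where
  "lambda_max n E = Max {\<mu>. eigenvalue (adj_mat n E) \<mu>}"

definition contains_subgraph ::
  "nat \<Rightarrow> (nat \<Rightarrow> nat \<Rightarrow> bool) \<Rightarrow> nat \<Rightarrow> (nat \<Rightarrow> nat \<Rightarrow> bool) \<Rightarrow> bool" where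
  "contains_subgraph n G m F \<longleftrightarrow>
     (\<exists>f. inj_on f {..<m} \<and> f ` {..<m} \<subseteq> {..<n}
          \<and> (\<forall>i<m. \<forall>j<m. F i j \<longrightarrow> G (f i) (f j)))"

definition graph_iso :: "nat \<Rightarrow> (nat \<Rightarrow> nat \<Rightarrow> bool) \<Rightarrow> (nat \<Rightarrow> nat \<Rightarrow> bool) \<Rightarrow> bool" where
  "graph_iso n G H \<longleftrightarrow>
     (\<exists>f. bij_betw f {..<n} {..<n} \<and> (\<forall>i<n. \<forall>j<n. G i j \<longleftrightarrow> H (f i) (f j)))"

text \<open>t K_s: disjoint union of t copies of K_s on vertices {0..<t*s}; vertices i, j are
  adjacent iff distinct and in the same block of size s.\<close>
definition disjoint_cliques :: "nat \<Rightarrow> nat \<Rightarrow> nat \<Rightarrow> nat \<Rightarrow> bool" where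
  "disjoint_cliques t s i j \<longleftrightarrow> i < t * s \<and> j < t * s \<and> i \<noteq> j \<and> i div s = j div s"

text \<open>H_{n,m} = K_{m-1} join (K_{n-m} union K_1): vertices 0..n-2 form a clique,
  vertex n-1 is adjacent exactly to vertices 0..m-2.\<close>
definition H_graph :: "nat \<Rightarrow> nat \<Rightarrow> nat \<Rightarrow> nat \<Rightarrow> bool" where
  "H_graph n m i j \<longleftrightarrow> i < n \<and> j < n \<and> i \<noteq> j \<and>
     ((i < n - 1 \<and> j < n - 1) \<or> (i = n - 1 \<and> j < m - 1) \<or> (j = n - 1 \<and> i < m - 1))"

end

theory Submission
  imports Defs
begin

text \<open>Let \<open>\<mu> = \<lambda>(G) \<ge> \<lambda>(H\<^sub>n\<^sub>,\<^sub>r) \<ge> n - 2\<close>. Comparing a nonnegative eigenvector with positive test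
  vectors (the Collatz--Wielandt bound for the symmetric adjacency matrix) shows that the
  deficiencies \<open>n - 2 - deg v\<close> sum to at most n - 2: at most one vertex has degree below n / 4,
  and only O(s) vertices have more than \<open>n / (8 s)\<close> non-neighbours, where \<open>s = r + 1\<close>.

  If a vertex t of degree below n / 4 has no \<open>K\<^sub>r\<close> in its neighbourhood, test vectors show that
  \<open>G - t\<close> is complete (else \<open>\<mu> < n - 2\<close>) and that t has exactly r - 1 neighbours (else
  \<open>\<mu> < \<lambda>(H\<^sub>n\<^sub>,\<^sub>r)\<close>), so \<open>G \<cong> H\<^sub>n\<^sub>,\<^sub>r\<close>. Otherwise G contains \<open>(n / s) K\<^sub>s\<close>: the few sparse vertices
  (and t) are covered greedily by disjoint s-cliques, and the remaining dense vertices are split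
  into blocks of size s, exchanging vertices between blocks until every block is a clique.
  Isomorphic graphs have the same spectrum, which gives the equality case.\<close>

section \<open>Adjacency matrices and their eigenvalues\<close>

text \<open>\<open>adj_sum n E z i\<close> is the i-th entry of \<open>A z\<close> for the adjacency matrix A, with vectors
  represented as functions on \<open>{..<n}\<close>.\<close>
definition adj_sum :: "nat \<Rightarrow> (nat \<Rightarrow> nat \<Rightarrow> bool) \<Rightarrow> (nat \<Rightarrow> 'a::comm_monoid_add) \<Rightarrow> nat \<Rightarrow> 'a" where
  "adj_sum n E z i = (\<Sum>j<n. if E i j then z j else 0)"

definition nbhd :: "nat \<Rightarrow> (nat \<Rightarrow> nat \<Rightarrow> bool) \<Rightarrow> nat \<Rightarrow> nat set" where
  "nbhd n E v = {w. w < n \<and> E v w}"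

definition deg :: "nat \<Rightarrow> (nat \<Rightarrow> nat \<Rightarrow> bool) \<Rightarrow> nat \<Rightarrow> nat" where
  "deg n E v = card (nbhd n E v)"

definition non_nbhd :: "nat \<Rightarrow> (nat \<Rightarrow> nat \<Rightarrow> bool) \<Rightarrow> nat \<Rightarrow> nat set" where
  "non_nbhd n E v = {w. w < n \<and> w \<noteq> v \<and> \<not> E v w}"

lemma finite_nbhd [simp]: "finite (nbhd n E v)"
  by (simp add: nbhd_def)

lemma finite_non_nbhd [simp]: "finite (non_nbhd n E v)"
  by (simp add: non_nbhd_def)

lemma adj_sum_eq_sum_nbhd: "adj_sum n E z i = sum z (nbhd n E i)"
proof -
  have "nbhd n E i = {j \<in> {..<n}. E i j}"
    by (auto simp: nbhd_def)
  then show ?thesis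
    by (simp add: adj_sum_def sum.inter_filter[symmetric])
qed

lemma adj_sum_le_deg:
  fixes y :: "nat \<Rightarrow> real"
  assumes "\<And>i. i < n \<Longrightarrow> y i \<le> 1"
  shows "adj_sum n E y v \<le> deg n E v"
proof -
  have "adj_sum n E y v \<le> sum (\<lambda>_. 1) (nbhd n E v)"
    unfolding adj_sum_eq_sum_nbhd by (rule sum_mono) (auto simp: assms nbhd_def)
  then show ?thesis
    by (simp add: deg_def)
qed

lemma mult_mat_adj_vec_nth:
  fixes v :: "'a::semiring_1 vec"
  assumes "v \<in> carrier_vec n" "i < n"
  shows "(mat n n (\<lambda>(i, j). if E i j then 1 else 0) *\<^sub>v v) $ i = adj_sum n E (($) v) i"
  using assms by (auto simp: adj_sum_def scalar_prod_def lessThan_atLeast0 intro!: sum.cong)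

lemma adj_mat_carrier [simp]: "adj_mat n E \<in> carrier_mat n n"
  by (simp add: adj_mat_def)

lemma eigenvalue_adj_mat_iff:
  "eigenvalue (adj_mat n E) \<mu> \<longleftrightarrow>
     (\<exists>v. (\<forall>i<n. adj_sum n E v i = \<mu> * v i) \<and> (\<exists>k<n. v k \<noteq> 0))"
proof
  assume "eigenvalue (adj_mat n E) \<mu>"
  then obtain v where v: "v \<in> carrier_vec n" "v \<noteq> 0\<^sub>v n" "adj_mat n E *\<^sub>v v = \<mu> \<cdot>\<^sub>v v"
    unfolding eigenvalue_def eigenvector_def by (auto simp: adj_mat_def)
  obtain k where "k < n" "v $ k \<noteq> 0"
    using v(1,2) by (metis eq_vecI carrier_vecD index_zero_vec)
  moreover have "adj_sum n E (($) v) i = \<mu> * v $ i" if "i < n" for i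
    using arg_cong[OF v(3), of "\<lambda>w. w $ i"] mult_mat_adj_vec_nth[OF v(1) that] v(1) that
    by (simp add: adj_mat_def)
  ultimately show "\<exists>v. (\<forall>i<n. adj_sum n E v i = \<mu> * v i) \<and> (\<exists>k<n. v k \<noteq> 0)"
    by blast
next
  assume "\<exists>v. (\<forall>i<n. adj_sum n E v i = \<mu> * v i) \<and> (\<exists>k<n. v k \<noteq> 0)"
  then obtain v k where v: "\<And>i. i < n \<Longrightarrow> adj_sum n E v i = \<mu> * v i" and k: "k < n" "v k \<noteq> 0"
    by blast
  define w where "w = vec n v"
  have w: "w \<in> carrier_vec n" "w \<noteq> 0\<^sub>v n"
    using k by (auto simp: w_def dest!: arg_cong[of _ _ "\<lambda>u. u $ k"])
  have "adj_mat n E *\<^sub>v w = \<mu> \<cdot>\<^sub>v w"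
  proof (rule eq_vecI)
    fix i assume "i < dim_vec (\<mu> \<cdot>\<^sub>v w)"
    then have i: "i < n"
      by (simp add: w_def)
    have "(adj_mat n E *\<^sub>v w) $ i = adj_sum n E (($) w) i"
      using mult_mat_adj_vec_nth[OF w(1) i] by (simp add: adj_mat_def)
    also have "\<dots> = adj_sum n E v i"
      unfolding adj_sum_def w_def by (rule sum.cong) auto
    finally have "(adj_mat n E *\<^sub>v w) $ i = adj_sum n E v i" .
    then show "(adj_mat n E *\<^sub>v w) $ i = (\<mu> \<cdot>\<^sub>v w) $ i"
      using v[OF i] i by (simp add: w_def)
  qed (simp add: adj_mat_def w_def)
  then show "eigenvalue (adj_mat n E) \<mu>"
    using w unfolding eigenvalue_def eigenvector_def by (auto simp: adj_mat_def)
qed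

lemma finite_eigenvalues_adj_mat: "finite {\<mu>. eigenvalue (adj_mat n E) \<mu>}"
proof -
  have "char_poly (adj_mat n E) \<noteq> 0"
    using degree_monic_char_poly[of "adj_mat n E" n] by auto
  then have "finite {\<mu>. poly (char_poly (adj_mat n E)) \<mu> = 0}"
    by (rule poly_roots_finite)
  then show ?thesis
    using eigenvalue_root_char_poly[of "adj_mat n E" n] by simp
qed

lemma eigenvalue_le_lambda_max: "eigenvalue (adj_mat n E) \<mu> \<Longrightarrow> \<mu> \<le> lambda_max n E"
  unfolding lambda_max_def using Max_ge[OF finite_eigenvalues_adj_mat] by simp

text \<open>y is the vector of moduli of an eigenvector, scaled to maximum 1.\<close>
lemma eigenvalue_adj_mat_subeigenvector:
  assumes "eigenvalue (adj_mat n E) \<mu>"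
  obtains y k where "\<And>i. i < n \<Longrightarrow> 0 \<le> y i \<and> y i \<le> 1" "k < n" "y k = 1"
    "\<And>i. i < n \<Longrightarrow> \<bar>\<mu>\<bar> * y i \<le> adj_sum n E y i"
proof -
  obtain v k0 where v: "\<And>i. i < n \<Longrightarrow> adj_sum n E v i = \<mu> * v i" and k0: "k0 < n" "v k0 \<noteq> 0"
    using assms unfolding eigenvalue_adj_mat_iff by blast
  define M where "M = Max ((\<lambda>i. \<bar>v i\<bar>) ` {..<n})"
  have le_M: "\<bar>v i\<bar> \<le> M" if "i < n" for i
    unfolding M_def by (rule Max_ge) (use that in auto)
  obtain k where k: "k < n" "\<bar>v k\<bar> = M"
    unfolding M_def using Max_in[of "(\<lambda>i. \<bar>v i\<bar>) ` {..<n}"] k0(1) by fastforce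
  have M: "M > 0"
    using le_M[OF k0(1)] k0(2) by linarith
  define y where "y i = \<bar>v i\<bar> / M" for i
  have "\<bar>\<mu>\<bar> * y i \<le> adj_sum n E y i" if i: "i < n" for i
  proof -
    have "\<bar>\<mu>\<bar> * \<bar>v i\<bar> = \<bar>adj_sum n E v i\<bar>"
      by (simp add: v[OF i] abs_mult)
    also have "\<dots> \<le> adj_sum n E (\<lambda>j. \<bar>v j\<bar>) i"
      unfolding adj_sum_def by (rule order_trans[OF sum_abs]) (simp add: if_distrib)
    finally have "\<bar>\<mu>\<bar> * \<bar>v i\<bar> / M \<le> adj_sum n E (\<lambda>j. \<bar>v j\<bar>) i / M"
      using M by (simp add: divide_right_mono)
    also have "adj_sum n E (\<lambda>j. \<bar>v j\<bar>) i / M = adj_sum n E y i"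
      unfolding adj_sum_def y_def sum_divide_distrib by (rule sum.cong) auto
    finally show ?thesis
      by (simp add: y_def)
  qed
  then show thesis
    using that[of y k] k M le_M by (auto simp: y_def)
qed

lemma eigenvalue_adj_mat_graph_iso:
  assumes f: "bij_betw f {..<n} {..<n}" and GH: "\<And>i j. i < n \<Longrightarrow> j < n \<Longrightarrow> G i j \<longleftrightarrow> H (f i) (f j)"
    and "eigenvalue (adj_mat n H) \<mu>"
  shows "eigenvalue (adj_mat n G) \<mu>"
proof -
  obtain v k where v: "\<And>i. i < n \<Longrightarrow> adj_sum n H v i = \<mu> * v i" and k: "k < n" "v k \<noteq> 0"
    using assms(3) unfolding eigenvalue_adj_mat_iff by blast
  obtain i where i: "i < n" "f i = k"
    using f k(1) by (metis bij_betw_iff_bijections lessThan_iff)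
  have "adj_sum n G (v \<circ> f) a = \<mu> * (v \<circ> f) a" if a: "a < n" for a
  proof -
    have fa: "f a < n"
      using f a by (auto simp: bij_betw_def)
    have "adj_sum n G (v \<circ> f) a = (\<Sum>j<n. if H (f a) (f j) then v (f j) else 0)"
      unfolding adj_sum_def by (rule sum.cong) (simp_all add: GH a)
    also have "\<dots> = adj_sum n H v (f a)"
      unfolding adj_sum_def by (rule sum.reindex_bij_betw[OF f])
    finally show ?thesis
      by (simp add: v[OF fa])
  qed
  then show ?thesis
    unfolding eigenvalue_adj_mat_iff using i k by (auto intro!: exI[of _ "v \<circ> f"])
qed

lemma lambda_max_graph_iso:
  assumes "graph_iso n G H"
  shows "lambda_max n G = lambda_max n H"
proof -
  obtain f where f: "bij_betw f {..<n} {..<n}" and GH: "\<And>i j. i < n \<Longrightarrow> j < n \<Longrightarrow> G i j \<longleftrightarrow> H (f i) (f j)"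
    using assms unfolding graph_iso_def by blast
  define g where "g = inv_into {..<n} f"
  have g: "bij_betw g {..<n} {..<n}"
    unfolding g_def by (rule bij_betw_inv_into[OF f])
  have HG: "H i j \<longleftrightarrow> G (g i) (g j)" if "i < n" "j < n" for i j
  proof -
    have "g i < n" "g j < n"
      using bij_betw_apply[OF g] that by auto
    moreover have "f (g i) = i" "f (g j) = j"
      using f that by (auto simp: g_def bij_betw_inv_into_right)
    ultimately show ?thesis
      using GH[of "g i" "g j"] by simp
  qed
  have "{\<mu>. eigenvalue (adj_mat n G) \<mu>} = {\<mu>. eigenvalue (adj_mat n H) \<mu>}"
    using eigenvalue_adj_mat_graph_iso[of f n G H, OF f GH]
      eigenvalue_adj_mat_graph_iso[of g n H G, OF g HG] by blast
  then show ?thesis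
    by (simp add: lambda_max_def)
qed

locale finite_simple_graph =
  fixes n :: nat and E :: "nat \<Rightarrow> nat \<Rightarrow> bool"
  assumes simple: "simple_graph n E"
begin

lemma sym: "E i j \<longleftrightarrow> E j i"
  using simple unfolding simple_graph_def by blast

lemma irrefl [simp]: "\<not> E i i"
  using simple unfolding simple_graph_def by blast

lemma edge_less: "E i j \<Longrightarrow> i < n" "E i j \<Longrightarrow> j < n"
  using simple unfolding simple_graph_def by blast+

lemma nbhd_subset: "nbhd n E v \<subseteq> {..<n} - {v}"
  by (auto simp: nbhd_def)

lemma deg_add_card_non_nbhd:
  assumes "v < n"
  shows "deg n E v + card (non_nbhd n E v) = n - 1"
proof -
  have "nbhd n E v \<union> non_nbhd n E v = {..<n} - {v}" "nbhd n E v \<inter> non_nbhd n E v = {}"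
    by (auto simp: nbhd_def non_nbhd_def)
  then have "card (nbhd n E v) + card (non_nbhd n E v) = card ({..<n} - {v})"
    by (metis card_Un_disjoint finite_nbhd finite_non_nbhd)
  then show ?thesis
    using assms by (simp add: deg_def)
qed

lemma sum_mult_adj_sum_commute:
  fixes y z :: "nat \<Rightarrow> 'a::comm_semiring_0"
  shows "(\<Sum>i<n. z i * adj_sum n E y i) = (\<Sum>i<n. y i * adj_sum n E z i)"
proof -
  have "(\<Sum>i<n. z i * adj_sum n E y i) = (\<Sum>i<n. \<Sum>j<n. if E i j then z i * y j else 0)"
    by (simp add: adj_sum_def sum_distrib_left if_distrib cong: if_cong)
  also have "\<dots> = (\<Sum>j<n. \<Sum>i<n. if E j i then y j * z i else 0)"
    by (subst sum.swap) (simp add: sym mult.commute cong: if_cong)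
  also have "\<dots> = (\<Sum>i<n. y i * adj_sum n E z i)"
    by (simp add: adj_sum_def sum_distrib_left if_distrib cong: if_cong)
  finally show ?thesis .
qed

text \<open>The Rayleigh quotient \<open>v\<^sup>* A v / v\<^sup>* v\<close> of a complex eigenvector is real, because A is real
  symmetric; so some root of the characteristic polynomial is real.\<close>
lemma real_eigenvalue_exists:
  assumes "n > 0"
  obtains \<mu> where "eigenvalue (adj_mat n E) \<mu>"
proof -
  let ?A = "adj_mat n E"
  let ?Ac = "map_mat complex_of_real ?A"
  have Ac: "?Ac \<in> carrier_mat n n"
    by simp
  have cp: "char_poly ?Ac = map_poly complex_of_real (char_poly ?A)"
    by (rule of_real_hom.char_poly_hom[of _ n]) simp
  have "degree (char_poly ?Ac) = n"
    using degree_monic_char_poly[OF Ac] by simp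
  then have "\<not> constant (poly (char_poly ?Ac))"
    using assms by (metis constant_degree neq0_conv)
  then obtain c where c: "poly (char_poly ?Ac) c = 0"
    using fundamental_theorem_of_algebra by blast
  have Ac_eq: "?Ac = mat n n (\<lambda>(i, j). if E i j then 1 else 0)"
    by (rule eq_matI) (auto simp: adj_mat_def)
  have "eigenvalue ?Ac c"
    using c eigenvalue_root_char_poly[OF Ac] by simp
  then obtain v where v: "v \<in> carrier_vec n" "v \<noteq> 0\<^sub>v n" "?Ac *\<^sub>v v = c \<cdot>\<^sub>v v"
    unfolding eigenvalue_def eigenvector_def by (auto simp: adj_mat_def)
  have eq: "adj_sum n E (($) v) i = c * v $ i" if "i < n" for i
    using arg_cong[OF v(3), of "\<lambda>w. w $ i"] mult_mat_adj_vec_nth[OF v(1) that] v(1) that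
    by (simp add: Ac_eq)
  define q where "q = (\<Sum>i<n. cnj (v $ i) * adj_sum n E (($) v) i)"
  define N where "N = (\<Sum>i<n. (cmod (v $ i))\<^sup>2)"
  have q: "q = c * of_real N"
  proof -
    have "q = c * (\<Sum>i<n. cnj (v $ i) * v $ i)"
      unfolding q_def sum_distrib_left by (rule sum.cong) (simp_all add: eq)
    also have "(\<Sum>i<n. cnj (v $ i) * v $ i) = of_real N"
      unfolding N_def of_real_sum by (rule sum.cong) (simp_all add: complex_norm_square mult.commute[of "cnj _"] del: of_real_power)
    finally show ?thesis .
  qed
  have "cnj q = (\<Sum>i<n. v $ i * adj_sum n E (\<lambda>j. cnj (v $ j)) i)"
    by (simp add: q_def adj_sum_def if_distrib cong: if_cong)
  also have "\<dots> = q"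
    unfolding q_def by (rule sum_mult_adj_sum_commute)
  finally have q_real: "cnj q = q" .
  obtain i where i: "i < n" "v $ i \<noteq> 0"
    using v(1,2) by (metis eq_vecI carrier_vecD index_zero_vec)
  have "0 < (cmod (v $ i))\<^sup>2" "(cmod (v $ i))\<^sup>2 \<le> N"
    using i unfolding N_def by (auto intro!: member_le_sum)
  then have "N > 0"
    by linarith
  then have "cnj c = c"
    using q q_real by (simp add: complex_cnj_divide eq_divide_eq[symmetric])
  then have c_real: "c = of_real (Re c)"
    by (metis Reals_cnj_iff complex_is_Real_iff of_real_Re)
  have "poly (char_poly ?A) (Re c) = 0"
    using c unfolding cp by (subst (asm) c_real) (simp add: of_real_hom.poly_map_poly)
  then show thesis
    using that eigenvalue_root_char_poly[of ?A n] by auto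
qed

lemma eigenvalue_lambda_max:
  assumes "n > 0"
  shows "eigenvalue (adj_mat n E) (lambda_max n E)"
proof -
  have "{\<mu>. eigenvalue (adj_mat n E) \<mu>} \<noteq> {}"
    using real_eigenvalue_exists[OF assms] by blast
  then show ?thesis
    unfolding lambda_max_def using Max_in[OF finite_eigenvalues_adj_mat] by simp
qed

text \<open>Collatz--Wielandt bound: pair \<open>\<bar>\<mu>\<bar> y \<le> A y\<close> for the subeigenvector y against \<open>A z < c z\<close>,
  using the symmetry of A.\<close>
lemma eigenvalue_less_by_test_vector:
  fixes z :: "nat \<Rightarrow> real"
  assumes pos: "\<And>i. i < n \<Longrightarrow> 0 < z i"
    and less: "\<And>i. i < n \<Longrightarrow> adj_sum n E z i < c * z i"
    and "eigenvalue (adj_mat n E) \<mu>"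
  shows "\<mu> < c"
proof -
  obtain y k where y: "\<And>i. i < n \<Longrightarrow> 0 \<le> y i \<and> y i \<le> 1" and k: "k < n" "y k = 1"
    and sub: "\<And>i. i < n \<Longrightarrow> \<bar>\<mu>\<bar> * y i \<le> adj_sum n E y i"
    using eigenvalue_adj_mat_subeigenvector[OF assms(3)] by metis
  define S where "S = (\<Sum>i<n. z i * y i)"
  have "0 \<le> z i * y i" if "i < n" for i
    using pos[OF that] y[OF that] by simp
  then have "z k * y k \<le> S"
    unfolding S_def using k(1) by (intro member_le_sum) auto
  then have S: "S > 0"
    using pos[OF k(1)] k(2) by simp
  have "\<bar>\<mu>\<bar> * S = (\<Sum>i<n. z i * (\<bar>\<mu>\<bar> * y i))"
    unfolding S_def sum_distrib_left by (simp add: ac_simps)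
  also have "\<dots> \<le> (\<Sum>i<n. z i * adj_sum n E y i)"
    by (rule sum_mono) (use sub pos in \<open>auto intro!: mult_left_mono less_imp_le\<close>)
  also have "\<dots> = (\<Sum>i<n. y i * adj_sum n E z i)"
    by (rule sum_mult_adj_sum_commute)
  also have "\<dots> < (\<Sum>i<n. y i * (c * z i))"
  proof (rule sum_strict_mono_ex1)
    show "\<forall>i\<in>{..<n}. y i * adj_sum n E z i \<le> y i * (c * z i)"
      using y less by (auto intro!: mult_left_mono[OF less_imp_le])
    show "\<exists>i\<in>{..<n}. y i * adj_sum n E z i < y i * (c * z i)"
      using k less[OF k(1)] by (intro bexI[of _ k]) auto
  qed simp
  also have "\<dots> = c * S"
    unfolding S_def sum_distrib_left by (simp add: ac_simps)
  finally show ?thesis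
    using S by (simp add: mult_less_cancel_right_pos abs_less_iff)
qed

end

section \<open>The graph \<open>H\<^sub>n\<^sub>,\<^sub>r\<close>\<close>

lemma nbhd_H_graph_last:
  assumes "r \<le> n"
  shows "nbhd n (H_graph n r) (n - 1) = {..<r - 1}"
  using assms by (auto simp: nbhd_def H_graph_def)

lemma nbhd_H_graph_low:
  assumes "i < r - 1" "r \<le> n"
  shows "nbhd n (H_graph n r) i = {..<n} - {i}"
  using assms by (auto simp: nbhd_def H_graph_def)

lemma nbhd_H_graph_high:
  assumes "r - 1 \<le> i" "i < n - 1"
  shows "nbhd n (H_graph n r) i = {..<n - 1} - {i}"
  using assms by (auto simp: nbhd_def H_graph_def)

lemma H_graph_below_last_iff: "a < n - 1 \<Longrightarrow> b < n - 1 \<Longrightarrow> H_graph n r a b \<longleftrightarrow> a \<noteq> b"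
  by (auto simp: H_graph_def)

lemma H_graph_last_iff: "b < n - 1 \<Longrightarrow> H_graph n r (n - 1) b \<longleftrightarrow> b < r - 1"
  by (auto simp: H_graph_def)

lemma H_graph_last_iff': "a < n - 1 \<Longrightarrow> H_graph n r a (n - 1) \<longleftrightarrow> a < r - 1"
  by (auto simp: H_graph_def)

lemma eigenvalue_H_graph_1:
  assumes "n \<ge> 2"
  shows "eigenvalue (adj_mat n (H_graph n 1)) (real n - 2)"
  unfolding eigenvalue_adj_mat_iff
proof (intro exI[of _ "\<lambda>i. if i < n - 1 then 1 else 0"] conjI allI impI)
  let ?v = "\<lambda>i. if i < n - 1 then 1 else 0 :: real"
  fix i assume i: "i < n"
  show "adj_sum n (H_graph n 1) ?v i = (real n - 2) * ?v i"
  proof (cases "i < n - 1")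
    case True
    have "adj_sum n (H_graph n 1) ?v i = sum (\<lambda>_. 1) ({..<n - 1} - {i})"
      unfolding adj_sum_eq_sum_nbhd using True by (subst nbhd_H_graph_high) auto
    then show ?thesis
      using True assms by (simp add: of_nat_diff)
  next
    case False
    then have "i = n - 1"
      using i by simp
    show ?thesis
      unfolding adj_sum_eq_sum_nbhd \<open>i = n - 1\<close> using assms by (subst nbhd_H_graph_last) auto
  qed
qed (use assms in \<open>intro exI[of _ 0], auto\<close>)

text \<open>For \<open>r \<ge> 2\<close> the vertex classes \<open>{n - 1}\<close>, \<open>{..<r - 1}\<close> and the remaining n - r vertices
  form an equitable partition of \<open>H_graph n r\<close>. These are the eigen-equations of its quotient
  matrix for an eigenvector with entries x, 1, b on the three classes; the cubic obtained by
  eliminating x and b changes sign on \<open>[n - 2, n - 1]\<close>.\<close>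
lemma H_graph_quotient_eigenvalue:
  assumes r: "r \<ge> 2" and n: "n \<ge> r + 2"
  obtains \<mu> x b :: real where "real n - 2 < \<mu>" "\<mu> * x = real r - 1"
    "\<mu> * b = (real r - 1) + (real n - real r - 1) * b" "\<mu> = x + (real r - 2) + (real n - real r) * b"
    "0 < x" "0 < b" "b < 1"
proof -
  define R N where "R = real r" and "N = real n"
  have R2: "R \<ge> 2" and NR: "N \<ge> R + 2"
    using r n by (simp_all add: R_def N_def)
  define p where "p m = (R-1)*(m-N+R+1) + (R-2)*m*(m-N+R+1) + (N-R)*(R-1)*m - m^2*(m-N+R+1)" for m
  have p1: "p (N - 2) = (R - 1)\<^sup>2"
    by (simp add: p_def algebra_simps power2_eq_square)
  have "N * (N - 1) > R * (R - 1)"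
    using NR R2 by (intro mult_strict_mono) auto
  then have p2: "p (N - 1) \<le> 0"
    by (simp add: p_def algebra_simps power2_eq_square)
  have "\<forall>m. N - 2 \<le> m \<and> m \<le> N - 1 \<longrightarrow> isCont p m"
    unfolding p_def by (intro allI impI continuous_intros)
  then obtain \<mu> where mu: "N - 2 \<le> \<mu>" "p \<mu> = 0"
    using IVT2[of p "N - 1" 0 "N - 2"] p1 p2 by force
  have mu_gt: "\<mu> > N - 2"
    using mu p1 R2 by (cases "\<mu> = N - 2") auto
  define c where "c = \<mu> - N + R + 1"
  have c: "c > R - 1"
    using mu_gt by (simp add: c_def)
  have mu_pos: "\<mu> > 0"
    using mu_gt NR R2 by simp
  define x b where "x = (R - 1) / \<mu>" and "b = (R - 1) / c"
  have "\<mu> * c * \<mu> = (R-1)*c + (R-2)*\<mu>*c + (N-R)*(R-1)*\<mu>"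
    using mu(2) by (simp add: p_def c_def algebra_simps power2_eq_square)
  then have "\<mu> = x + (R - 2) + (N - R) * b"
    using mu_pos c R2 by (simp add: x_def b_def field_simps)
  moreover have "\<mu> * b = (R - 1) + (N - R - 1) * b"
    using c R2 by (simp add: b_def c_def field_simps)
  moreover have "\<mu> * x = R - 1" "0 < x" "0 < b" "b < 1"
    using mu_pos c R2 by (simp_all add: x_def b_def field_simps)
  ultimately show thesis
    using that[of \<mu> x b] mu_gt by (simp add: R_def N_def)
qed

lemma eigenvalue_H_graph:
  fixes \<mu> x b :: real
  assumes r: "r \<ge> 2" and n: "n \<ge> r + 2" and eq_last: "\<mu> * x = real r - 1"
    and eq_high: "\<mu> * b = (real r - 1) + (real n - real r - 1) * b"
    and eq_low: "\<mu> = x + (real r - 2) + (real n - real r) * b"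
  shows "eigenvalue (adj_mat n (H_graph n r)) \<mu>"
proof -
  define v where "v i = (if i = n - 1 then x else if i < r - 1 then 1 else b)" for i
  have sum_high: "(\<Sum>j<n - 1. v j) = (real r - 1) + (real n - real r) * b"
  proof -
    have "(\<Sum>j<n - 1. v j) = (\<Sum>j<r - 1. v j) + (\<Sum>j = r - 1..<n - 1. v j)"
      using sum.atLeastLessThan_concat[of 0 "r - 1" "n - 1" v] n by (simp add: lessThan_atLeast0)
    also have "\<dots> = (\<Sum>j<r - 1. 1) + (\<Sum>j = r - 1..<n - 1. b)"
      using n by (intro arg_cong2[where f = "(+)"] sum.cong) (auto simp: v_def)
    finally show ?thesis
      using n r by (simp add: of_nat_diff)
  qed
  have sum_all: "(\<Sum>j<n. v j) = (real r - 1) + (real n - real r) * b + x"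
  proof -
    have "n = Suc (n - 1)"
      using n by simp
    then have "(\<Sum>j<n. v j) = (\<Sum>j<n - 1. v j) + v (n - 1)"
      by (metis sum.lessThan_Suc)
    moreover have "v (n - 1) = x"
      by (simp add: v_def)
    ultimately show ?thesis
      using sum_high by simp
  qed
  have "adj_sum n (H_graph n r) v i = \<mu> * v i" if i: "i < n" for i
  proof -
  consider "i = n - 1" | "i < r - 1" | "r - 1 \<le> i" "i < n - 1"
    using i by linarith
  then show "adj_sum n (H_graph n r) v i = \<mu> * v i"
  proof cases
    case 1
    have "adj_sum n (H_graph n r) v i = (\<Sum>j<r - 1. v j)"
      unfolding adj_sum_eq_sum_nbhd 1 using n by (subst nbhd_H_graph_last) auto
    also have "\<dots> = (\<Sum>j<r - 1. 1)"
      using n by (intro sum.cong) (auto simp: v_def)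
    finally show ?thesis
      using 1 eq_last r by (simp add: v_def of_nat_diff)
  next
    case 2
    have vi: "v i = 1"
      using 2 n by (simp add: v_def)
    have "adj_sum n (H_graph n r) v i = (\<Sum>j<n. v j) - v i"
      unfolding adj_sum_eq_sum_nbhd using n 2 i by (subst nbhd_H_graph_low) (auto simp: sum_diff1)
    also have "\<dots> = (real r - 1) + (real n - real r) * b + x - 1"
      by (simp only: sum_all vi)
    also have "\<dots> = \<mu> * v i"
      unfolding vi eq_low mult_1_right by linarith
    finally show ?thesis .
  next
    case 3
    have "adj_sum n (H_graph n r) v i = (\<Sum>j<n - 1. v j) - v i"
      unfolding adj_sum_eq_sum_nbhd using 3 by (subst nbhd_H_graph_high) (auto simp: sum_diff1)
    then show ?thesis
      using 3 sum_high eq_high by (simp add: v_def algebra_simps)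
  qed
  qed
  moreover have "v 0 \<noteq> 0"
    using n r by (simp add: v_def)
  ultimately show ?thesis
    unfolding eigenvalue_adj_mat_iff using n by (intro exI[of _ v] conjI exI[of _ 0]) auto
qed

lemma lambda_max_H_graph_ge:
  assumes "r \<ge> 1" "n \<ge> r + 2"
  shows "real n - 2 \<le> lambda_max n (H_graph n r)"
proof (cases "r = 1")
  case True
  then show ?thesis
    using eigenvalue_le_lambda_max[OF eigenvalue_H_graph_1] assms by simp
next
  case False
  then have "r \<ge> 2"
    using assms by simp
  then obtain \<mu> x b where "real n - 2 < \<mu>" "eigenvalue (adj_mat n (H_graph n r)) \<mu>"
    using H_graph_quotient_eigenvalue eigenvalue_H_graph assms(2) by metis
  then show ?thesis
    using eigenvalue_le_lambda_max by force
qed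

lemma bij_betw_H_graph_layout:
  assumes t: "t < n" and W: "W \<subseteq> {..<n} - {t}" "card W = r - 1" and r: "r \<ge> 1" "r + 1 \<le> n"
  obtains f where "bij_betw f {..<n} {..<n}" "f t = n - 1"
    "\<And>i. i < n \<Longrightarrow> i \<noteq> t \<Longrightarrow> f i < n - 1"
    "\<And>i. i < n \<Longrightarrow> i \<noteq> t \<Longrightarrow> f i < r - 1 \<longleftrightarrow> i \<in> W"
proof -
  define V' where "V' = {..<n} - {t}"
  have WV: "W \<subseteq> V'" and card_rest: "card (V' - W) = n - r"
    using W t r card_Diff_subset[of W V'] finite_subset[of W V'] by (auto simp: V'_def)
  have "finite W"
    using W(1) finite_subset by blast
  then obtain g1 where g1: "bij_betw g1 W {..<r - 1}"
    using finite_same_card_bij[of W "{..<r - 1}"] W(2) by auto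
  obtain g2 where g2: "bij_betw g2 (V' - W) {r - 1..<n - 1}"
    using finite_same_card_bij[of "V' - W" "{r - 1..<n - 1}"] card_rest r by (auto simp: V'_def)
  define f where "f i = (if i = t then n - 1 else if i \<in> W then g1 i else g2 i)" for i
  have "bij_betw f W {..<r - 1}"
    by (rule bij_betw_cong[THEN iffD2, OF _ g1]) (use WV in \<open>auto simp: f_def V'_def\<close>)
  moreover have "bij_betw f (V' - W) {r - 1..<n - 1}"
    by (rule bij_betw_cong[THEN iffD2, OF _ g2]) (auto simp: f_def V'_def)
  moreover have "bij_betw f {t} {n - 1}"
    by (simp add: f_def)
  ultimately have "bij_betw f ({t} \<union> (W \<union> (V' - W))) ({n - 1} \<union> ({..<r - 1} \<union> {r - 1..<n - 1}))"
    using r by (intro bij_betw_combine) auto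
  moreover have "{t} \<union> (W \<union> (V' - W)) = {..<n}" "{n - 1} \<union> ({..<r - 1} \<union> {r - 1..<n - 1}) = {..<n}"
    using WV t r by (auto simp: V'_def)
  ultimately have "bij_betw f {..<n} {..<n}"
    by simp
  moreover have "f i < n - 1 \<and> (f i < r - 1 \<longleftrightarrow> i \<in> W)" if "i < n" "i \<noteq> t" for i
  proof (cases "i \<in> W")
    case True
    then show ?thesis
      using that bij_betwE[OF g1] r by (auto simp: f_def)
  next
    case False
    then have "i \<in> V' - W"
      using that by (simp add: V'_def)
    then show ?thesis
      using that False bij_betw_apply[OF g2 \<open>i \<in> V' - W\<close>] by (auto simp: f_def)
  qed
  ultimately show thesis
    using that by (simp add: f_def)
qed

section \<open>Graphs with a large eigenvalue\<close>

context finite_simple_graph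
begin

text \<open>The deficiency \<open>n - 2 - deg v\<close> of v is at most \<open>(n - 2) (1 - y v)\<close> for the subeigenvector y,
  and the entries of y off its maximum sum to at least \<open>\<mu> \<ge> n - 2\<close>.\<close>
lemma sum_deficiency_le:
  assumes ev: "eigenvalue (adj_mat n E) \<mu>" and mu: "real n - 2 \<le> \<mu>" and n: "n \<ge> 2"
    and A: "A \<subseteq> {..<n}"
  shows "(\<Sum>v\<in>A. real n - 2 - real (deg n E v)) \<le> real n - 2"
proof -
  obtain y k where y: "\<And>i. i < n \<Longrightarrow> 0 \<le> y i \<and> y i \<le> 1" and k: "k < n" "y k = 1"
    and sub: "\<And>i. i < n \<Longrightarrow> \<bar>\<mu>\<bar> * y i \<le> adj_sum n E y i"
    using eigenvalue_adj_mat_subeigenvector[OF ev] by metis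
  have mu_pos: "\<mu> \<ge> 0"
    using mu n by simp
  have deg: "\<mu> * y i \<le> deg n E i" if "i < n" for i
    using sub[OF that] adj_sum_le_deg[of n y E i] y mu_pos by fastforce
  have term_le: "real n - 2 - deg n E i \<le> (real n - 2) * (1 - y i)" if "i < n" for i
    using deg[OF that] mult_right_mono[OF mu, of "y i"] y[OF that] by (simp add: algebra_simps)
  have term_k: "real n - 2 - deg n E k \<le> 0"
    using deg[OF k(1)] k(2) mu by simp
  have "\<mu> \<le> adj_sum n E y k"
    using sub[OF k(1)] k(2) mu_pos by simp
  also have "\<dots> \<le> sum y ({..<n} - {k})"
    unfolding adj_sum_eq_sum_nbhd by (rule sum_mono2) (use y in \<open>auto simp: nbhd_def\<close>)
  finally have "sum (\<lambda>i. 1 - y i) ({..<n} - {k}) \<le> 1"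
    using k mu n by (simp add: sum_subtractf of_nat_diff)
  moreover have "sum (\<lambda>i. 1 - y i) (A - {k}) \<le> sum (\<lambda>i. 1 - y i) ({..<n} - {k})"
    by (rule sum_mono2) (use A y in auto)
  ultimately have "(real n - 2) * sum (\<lambda>i. 1 - y i) (A - {k}) \<le> real n - 2"
    using n by (simp add: mult_left_le)
  moreover have "(\<Sum>v\<in>A. real n - 2 - deg n E v) \<le> (\<Sum>v\<in>A - {k}. real n - 2 - deg n E v)"
    using term_k A by (cases "k \<in> A") (auto simp: sum.remove finite_subset)
  moreover have "(\<Sum>v\<in>A - {k}. real n - 2 - deg n E v) \<le> (\<Sum>v\<in>A - {k}. (real n - 2) * (1 - y v))"
    by (rule sum_mono) (use A term_le in auto)
  ultimately show ?thesis
    by (simp add: sum_distrib_left)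
qed

lemma low_deg_vertex_unique:
  assumes ev: "eigenvalue (adj_mat n E) \<mu>" and mu: "real n - 2 \<le> \<mu>" and n: "n \<ge> 4"
    and uw: "u < n" "w < n" "4 * deg n E u < n" "4 * deg n E w < n"
  shows "u = w"
proof (rule ccontr)
  assume "u \<noteq> w"
  then have "2 * (real n - 2) - deg n E u - deg n E w \<le> real n - 2"
    using sum_deficiency_le[OF ev mu, of "{u, w}"] uw n by simp
  moreover have "4 * real (deg n E u) < n" "4 * real (deg n E w) < n" "real n \<ge> 4"
    using uw n by linarith+
  ultimately show False
    by (simp add: algebra_simps)
qed

lemma card_many_non_nbrs:
  assumes ev: "eigenvalue (adj_mat n E) \<mu>" and mu: "real n - 2 \<le> \<mu>" and n: "n \<ge> 2"
  shows "card {v. v < n \<and> D \<le> card (non_nbhd n E v)} * (D - 1) \<le> n - 2"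
proof (cases "D = 0")
  case False
  define L where "L = {v. v < n \<and> D \<le> card (non_nbhd n E v)}"
  have "real D - 1 \<le> real n - 2 - deg n E v" if "v \<in> L" for v
    using that deg_add_card_non_nbhd[of v] by (auto simp: L_def)
  then have "real (card L) * (real D - 1) \<le> (\<Sum>v\<in>L. real n - 2 - deg n E v)"
    using sum_mono[of L "\<lambda>_. real D - 1"] by simp
  also have "\<dots> \<le> real n - 2"
    by (rule sum_deficiency_le[OF ev mu n]) (auto simp: L_def)
  finally have "real (card L * (D - 1)) \<le> real (n - 2)"
    using False n by (simp add: of_nat_diff)
  then show ?thesis
    unfolding of_nat_le_iff L_def .
qed simp

end

section \<open>A vertex of low degree\<close>

definition clique :: "('a \<Rightarrow> 'a \<Rightarrow> bool) \<Rightarrow> 'a set \<Rightarrow> bool" where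
  "clique E Q \<longleftrightarrow> (\<forall>a\<in>Q. \<forall>b\<in>Q. a \<noteq> b \<longrightarrow> E a b)"

lemma clique_subset: "clique E Q \<Longrightarrow> P \<subseteq> Q \<Longrightarrow> clique E P"
  by (auto simp: clique_def)

text \<open>Weights of the test vector used for a vertex t of low degree d when \<open>G - t\<close> is not complete:
  \<beta> on t, \<open>1 + \<epsilon>\<close> on the F neighbours of t adjacent to all other vertices, \<open>1 - \<delta>\<close> on the M
  vertices with a non-neighbour other than t, and 1 elsewhere.\<close>
lemma low_vertex_weights:
  fixes N R F M d :: real
  assumes F: "0 \<le> F" "F + 1 \<le> R" and M: "2 \<le> M" and d: "0 \<le> d" "d + 1 \<le> (R + 1) * M" "4 * d < N"
    and N: "8 \<le> N" "2 * R * (R + 1) + R < N"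
  obtains \<beta> \<epsilon> \<delta> where "\<beta> * (N - 2) = d + 1" "0 < \<beta>" "0 < \<epsilon>" "0 < \<delta>" "\<delta> < 1"
    "\<delta> * M = \<epsilon> * (F + 1)" "\<beta> < N * \<epsilon>" "\<beta> + \<epsilon> * F + \<delta> * (N - 2) < 1"
proof -
  define \<beta> where "\<beta> = (d + 1) / (N - 2)"
  define \<epsilon> where "\<epsilon> = \<beta> / (N - 1)"
  define \<delta> where "\<delta> = \<epsilon> * (F + 1) / M"
  have \<beta>: "\<beta> * (N - 2) = d + 1" "0 < \<beta>" "\<beta> \<le> 1 / 2"
    using N d by (auto simp: \<beta>_def field_simps)
  have \<epsilon>: "0 < \<epsilon>" "\<beta> < N * \<epsilon>"
    using \<beta> N by (auto simp: \<epsilon>_def field_simps)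
  have \<delta>: "0 < \<delta>" "\<delta> * M = \<epsilon> * (F + 1)"
    using \<epsilon> F M by (auto simp: \<delta>_def)
  have "\<beta> * F \<le> (R - 1) / 2"
    using \<beta> F mult_right_mono[OF \<beta>(3) F(1)] by simp
  then have "\<beta> * F / (N - 1) \<le> (R - 1) / 2 / (N - 1)"
    using N by (intro divide_right_mono) auto
  then have "\<epsilon> * F \<le> (R - 1) / 2 / (N - 1)"
    unfolding \<epsilon>_def times_divide_eq_left .
  moreover have "\<delta> * (N - 2) \<le> R * (R + 1) / (N - 1)"
  proof -
    have "\<delta> * (N - 2) = (d + 1) * (F + 1) / ((N - 1) * M)"
      using \<beta>(1) N M by (simp add: \<delta>_def \<epsilon>_def field_simps)
    also have "\<dots> \<le> ((R + 1) * M) * R / ((N - 1) * M)"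
      using F M N d by (intro divide_right_mono mult_mono) auto
    finally show ?thesis
      using M by (simp add: mult.commute)
  qed
  moreover have "(R - 1) / 2 / (N - 1) + R * (R + 1) / (N - 1) < 1 / 2"
  proof -
    have "((R - 1) / 2 + R * (R + 1)) / (N - 1) < 1 / 2"
      using N by (subst pos_divide_less_eq) (simp_all add: field_simps)
    then show ?thesis
      by (simp add: add_divide_distrib)
  qed
  ultimately have key: "\<beta> + \<epsilon> * F + \<delta> * (N - 2) < 1"
    using \<beta>(3) by linarith
  moreover have "\<delta> < 1"
  proof -
    have "\<delta> \<le> \<delta> * (N - 2)" "0 \<le> \<epsilon> * F"
      using \<delta>(1) \<epsilon>(1) F N by simp_all
    then show ?thesis
      using key \<beta>(2) by linarith
  qed
  ultimately show thesis
    using that \<beta>(1,2) \<epsilon> \<delta> by blast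
qed

context finite_simple_graph
begin

lemma graph_iso_H_graph_if_complete_minus_vertex:
  assumes t: "t < n" and r: "r \<ge> 1" "r + 1 \<le> n"
    and complete: "\<And>a b. a < n \<Longrightarrow> b < n \<Longrightarrow> a \<noteq> t \<Longrightarrow> b \<noteq> t \<Longrightarrow> a \<noteq> b \<Longrightarrow> E a b"
    and deg: "deg n E t = r - 1"
  shows "graph_iso n E (H_graph n r)"
proof -
  define W where "W = nbhd n E t"
  obtain f where f: "bij_betw f {..<n} {..<n}" and f_t: "f t = n - 1"
    and f_less: "\<And>i. i < n \<Longrightarrow> i \<noteq> t \<Longrightarrow> f i < n - 1"
    and f_W: "\<And>i. i < n \<Longrightarrow> i \<noteq> t \<Longrightarrow> f i < r - 1 \<longleftrightarrow> i \<in> W"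
    using bij_betw_H_graph_layout[OF t nbhd_subset deg[unfolded deg_def] r] unfolding W_def by blast
  have f_inj: "f i = f j \<longleftrightarrow> i = j" if "i < n" "j < n" for i j
    using f that by (auto simp: bij_betw_def inj_on_def)
  have "E i j \<longleftrightarrow> H_graph n r (f i) (f j)" if ij: "i < n" "j < n" for i j
  proof -
    consider "i = t" "j = t" | "i = t" "j \<noteq> t" | "i \<noteq> t" "j = t" | "i \<noteq> t" "j \<noteq> t"
      by blast
    then show ?thesis
    proof cases
      case 1
      then show ?thesis
        by (simp add: H_graph_def)
    next
      case 2
      have "H_graph n r (f i) (f j) \<longleftrightarrow> f j < r - 1"
        using 2 f_less[OF ij(2) 2(2)] by (simp only: f_t H_graph_last_iff)
      also have "\<dots> \<longleftrightarrow> E i j"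
        using 2 ij f_W[OF ij(2) 2(2)] by (simp add: W_def nbhd_def)
      finally show ?thesis
        by simp
    next
      case 3
      have "H_graph n r (f i) (f j) \<longleftrightarrow> f i < r - 1"
        using 3 f_less[OF ij(1) 3(1)] by (simp only: f_t H_graph_last_iff')
      also have "\<dots> \<longleftrightarrow> E i j"
        using 3 ij f_W[OF ij(1) 3(1)] sym by (simp add: W_def nbhd_def)
      finally show ?thesis
        by simp
    next
      case 4
      then show ?thesis
        using ij f_less f_inj complete by (auto simp: H_graph_below_last_iff)
    qed
  qed
  then show ?thesis
    using f by (auto simp: graph_iso_def)
qed

lemma eigenvalue_less_lambda_max_H_graph:
  assumes t: "t < n" and r: "r \<ge> 2" "r + 2 \<le> n"
    and complete: "\<And>a b. a < n \<Longrightarrow> b < n \<Longrightarrow> a \<noteq> t \<Longrightarrow> b \<noteq> t \<Longrightarrow> a \<noteq> b \<Longrightarrow> E a b"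
    and deg: "deg n E t + 2 \<le> r"
    and ev: "eigenvalue (adj_mat n E) \<mu>"
  shows "\<mu> < lambda_max n (H_graph n r)"
proof -
  obtain \<mu>\<^sub>H x b where "real n - 2 < \<mu>\<^sub>H" and H: "\<mu>\<^sub>H * x = real r - 1"
    "\<mu>\<^sub>H * b = (real r - 1) + (real n - real r - 1) * b" "\<mu>\<^sub>H = x + (real r - 2) + (real n - real r) * b"
    "0 < x" "0 < b" "b < 1"
    using H_graph_quotient_eigenvalue[OF r] by blast
  have ev_H: "eigenvalue (adj_mat n (H_graph n r)) \<mu>\<^sub>H"
    using eigenvalue_H_graph[OF r H(1-3)] .
  define V' W d where "V' = {..<n} - {t}" and "W = nbhd n E t" and "d = deg n E t"
  have WV: "W \<subseteq> V'"
    using nbhd_subset by (simp add: V'_def W_def)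
  have card_W: "card W = d" and card_rest: "card (V' - W) = n - 1 - d"
    using t card_Diff_subset[OF _ WV] by (auto simp: W_def V'_def d_def deg_def)
  define z where "z v = (if v = t then x else if v \<in> W then 1 else b)" for v
  have "sum z W = sum (\<lambda>_. 1) W"
    using WV by (intro sum.cong) (auto simp: z_def V'_def)
  then have "sum z W = d"
    using card_W by simp
  moreover have "sum z (V' - W) = sum (\<lambda>_. b) (V' - W)"
    by (intro sum.cong) (auto simp: z_def V'_def)
  then have "sum z (V' - W) = (real n - 1 - d) * b"
    using card_rest t card_mono[OF _ WV] card_W by (simp add: V'_def of_nat_diff)
  ultimately have sum_V': "sum z V' = d + (real n - 1 - d) * b"
    using sum.subset_diff[OF WV, of z] by (simp add: V'_def)
  have gap: "(real r - 1 - d) * (1 - b) > 0"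
    using deg H(6) by (simp add: d_def)
  have "adj_sum n E z i < \<mu>\<^sub>H * z i" if i: "i < n" for i
  proof -
    consider "i = t" | "i \<noteq> t" "i \<in> W" | "i \<noteq> t" "i \<notin> W"
      by blast
    then show ?thesis
    proof cases
      case 1
      then have "adj_sum n E z i = d"
        using \<open>sum z W = d\<close> by (simp add: adj_sum_eq_sum_nbhd W_def)
      then show ?thesis
        using 1 H(1) deg by (simp add: z_def d_def)
    next
      case 2
      then have "nbhd n E i = insert t (V' - {i})"
        using complete i t sym by (auto simp: nbhd_def V'_def W_def)
      then have "adj_sum n E z i = x + (sum z V' - 1)"
        using 2 i WV by (simp add: adj_sum_eq_sum_nbhd sum_diff1 z_def V'_def)
      also have "\<dots> < \<mu>\<^sub>H"
        using H(3) gap sum_V' by (simp add: algebra_simps)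
      finally show ?thesis
        using 2 by (simp add: z_def)
    next
      case 3
      then have "nbhd n E i = V' - {i}"
        using complete i t sym by (auto simp: nbhd_def V'_def W_def)
      then have "adj_sum n E z i = sum z V' - b"
        using 3 i by (simp add: adj_sum_eq_sum_nbhd sum_diff1 z_def V'_def)
      also have "\<dots> < \<mu>\<^sub>H * b"
        using H(2) gap sum_V' by (simp add: algebra_simps)
      finally show ?thesis
        using 3 by (simp add: z_def)
    qed
  qed
  moreover have "0 < z i" for i
    using H by (simp add: z_def)
  ultimately have "\<mu> < \<mu>\<^sub>H"
    using eigenvalue_less_by_test_vector[OF _ _ ev] by blast
  then show ?thesis
    using eigenvalue_le_lambda_max[OF ev_H] by simp
qed

end

definition universal_nbrs :: "nat \<Rightarrow> (nat \<Rightarrow> nat \<Rightarrow> bool) \<Rightarrow> nat \<Rightarrow> nat set" where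
  "universal_nbrs n E t = {w \<in> nbhd n E t. \<forall>x<n. x \<noteq> t \<longrightarrow> x \<noteq> w \<longrightarrow> E w x}"

definition defective :: "nat \<Rightarrow> (nat \<Rightarrow> nat \<Rightarrow> bool) \<Rightarrow> nat \<Rightarrow> nat set" where
  "defective n E t = {v. v < n \<and> v \<noteq> t \<and> (\<exists>x<n. x \<noteq> t \<and> x \<noteq> v \<and> \<not> E v x)}"

context finite_simple_graph
begin

lemma universal_nbrs_disjoint_defective: "universal_nbrs n E t \<inter> defective n E t = {}"
  by (auto simp: universal_nbrs_def defective_def nbhd_def)

lemma nbhd_subset_universal_nbrs_Un_defective:
  "nbhd n E t \<subseteq> universal_nbrs n E t \<union> defective n E t"
  by (auto simp: universal_nbrs_def defective_def nbhd_def)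

lemma card_universal_nbrs_less:
  assumes "\<not> (\<exists>Q \<subseteq> nbhd n E t. card Q = r \<and> clique E Q)"
  shows "card (universal_nbrs n E t) < r"
proof (rule ccontr)
  assume "\<not> card (universal_nbrs n E t) < r"
  then obtain Q where Q: "Q \<subseteq> universal_nbrs n E t" "card Q = r"
    by (meson not_less obtain_subset_with_card_n)
  have "clique E (universal_nbrs n E t)"
    by (auto simp: clique_def universal_nbrs_def nbhd_def dest: edge_less)
  then show False
    using assms Q clique_subset[of E _ Q] by (auto simp: universal_nbrs_def)
qed

lemma deg_add_one_le_card_defective:
  assumes few: "card (universal_nbrs n E t) < r" and defects: "2 \<le> card (defective n E t)"
  shows "deg n E t + 1 \<le> (r + 1) * card (defective n E t)"
proof -
  have "finite (universal_nbrs n E t)" "finite (defective n E t)"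
    by (auto simp: universal_nbrs_def defective_def)
  then have "deg n E t \<le> card (universal_nbrs n E t \<union> defective n E t)"
    using card_mono[OF _ nbhd_subset_universal_nbrs_Un_defective] by (simp add: deg_def)
  also have "\<dots> \<le> card (universal_nbrs n E t) + card (defective n E t)"
    by (rule card_Un_le)
  finally have "deg n E t + 1 \<le> r + card (defective n E t)"
    using few by linarith
  also have "\<dots> \<le> (r + 1) * card (defective n E t)"
    using defects by simp
  finally show ?thesis .
qed

text \<open>The weight missing at the low-degree vertex t is made up by its universal neighbours, and the
  non-edges among the other vertices pay for that.\<close>
lemma adj_sum_low_vertex_test_vector_less:
  fixes t i :: nat and \<beta> \<epsilon> \<delta> :: real
  defines "U \<equiv> universal_nbrs n E t" and "D \<equiv> defective n E t"
  defines "z \<equiv> \<lambda>v. if v = t then \<beta> else if v \<in> U then 1 + \<epsilon> else if v \<in> D then 1 - \<delta> else 1"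
  assumes t: "t < n" and n: "2 \<le> n" and defects: "2 \<le> card D"
    and \<beta>: "\<beta> * (real n - 2) = real (deg n E t) + 1" "0 < \<beta>"
    and \<epsilon>\<delta>: "0 < \<epsilon>" "0 < \<delta>" "\<delta> < 1" "\<delta> * card D = \<epsilon> * (real (card U) + 1)"
      "\<beta> < real n * \<epsilon>"
    and key: "\<beta> + \<epsilon> * card U + \<delta> * (real n - 2) < 1"
    and i: "i < n"
  shows "adj_sum n E z i < (real n - 2) * z i"
proof -
  define V' W where "V' = {..<n} - {t}" and "W = nbhd n E t"
  have WV: "W \<subseteq> V'" and UW: "U \<subseteq> W" and DV: "D \<subseteq> V'" and UD: "U \<inter> D = {}"
    using nbhd_subset universal_nbrs_disjoint_defective
    by (auto simp: V'_def W_def U_def D_def universal_nbrs_def defective_def)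
  have z_pos: "0 < z v" for v
    using \<beta> \<epsilon>\<delta> by (simp add: z_def)
  have sum_z: "sum z S = card S + \<epsilon> * card (S \<inter> U) - \<delta> * card (S \<inter> D)" if "S \<subseteq> V'" for S
  proof -
    have "finite S"
      using that by (auto simp: V'_def intro: finite_subset)
    moreover have "z v = 1 + (if v \<in> U then \<epsilon> else 0) - (if v \<in> D then \<delta> else 0)" if "v \<in> S" for v
      using that \<open>S \<subseteq> V'\<close> UD by (auto simp: z_def V'_def)
    ultimately show ?thesis
      by (simp add: sum.distrib sum_subtractf sum.If_cases Int_commute)
  qed
  have sum_V': "sum z V' = real n - 1 + \<epsilon> * card U - \<delta> * card D"
    using sum_z[of V'] WV UW DV t by (simp add: Int_absorb1 V'_def of_nat_diff)
  have "0 \<le> \<delta> * (real n - 2)"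
    using \<epsilon>\<delta>(2) n by simp
  then have small: "\<epsilon> * card U < 1" "2 * \<delta> \<le> \<delta> * card D"
    using key \<beta>(2) \<epsilon>\<delta>(2) defects by (simp_all add: mult_left_mono)
  consider "i = t" | "i \<in> U" | "i \<in> D" | "i \<noteq> t" "i \<notin> U" "i \<notin> D"
    by blast
  then show ?thesis
  proof cases
    case 1
    have "real (card (W \<inter> U)) \<le> card U"
      using card_mono[of U] by (simp add: U_def universal_nbrs_def)
    then have "\<epsilon> * card (W \<inter> U) \<le> \<epsilon> * card U" "0 \<le> \<delta> * card (W \<inter> D)"
      using \<epsilon>\<delta>(1,2) by (simp_all add: mult_left_mono)
    moreover have "adj_sum n E z t = card W + \<epsilon> * card (W \<inter> U) - \<delta> * card (W \<inter> D)"
      using sum_z[OF WV] by (simp add: adj_sum_eq_sum_nbhd W_def)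
    ultimately have "adj_sum n E z t \<le> deg n E t + \<epsilon> * card U"
      by (simp add: deg_def W_def)
    also have "\<dots> < (real n - 2) * z t"
      using small(1) \<beta>(1) by (simp add: z_def mult.commute)
    finally show ?thesis
      using 1 by simp
  next
    case 2
    then have "i \<in> V'" "nbhd n E i = insert t (V' - {i})"
      using UW WV sym t by (auto simp: U_def V'_def W_def universal_nbrs_def nbhd_def)
    then have "adj_sum n E z i = \<beta> + sum z V' - (1 + \<epsilon>)"
      using 2 UD by (simp add: adj_sum_eq_sum_nbhd sum_diff1 z_def V'_def)
    also have "\<dots> = real n - 2 + \<beta> - 2 * \<epsilon>"
      using sum_V' \<epsilon>\<delta>(4) by (simp add: algebra_simps)
    also have "\<dots> < (real n - 2) * (1 + \<epsilon>)"
      using \<epsilon>\<delta>(5) by (simp add: algebra_simps)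
    finally show ?thesis
      using 2 \<open>i \<in> V'\<close> by (simp add: z_def V'_def)
  next
    case 3
    then obtain x where x: "x \<in> V'" "x \<noteq> i" "\<not> E i x"
      by (auto simp: D_def V'_def defective_def)
    then have "x \<in> D" "i \<in> V'"
      using 3 DV sym by (auto simp: D_def V'_def defective_def)
    then have zx: "z x = 1 - \<delta>" "z i = 1 - \<delta>"
      using 3 UD x by (auto simp: z_def V'_def)
    have "{..<n} - {i, x} = insert t (V' - {i} - {x})"
      using x \<open>i \<in> V'\<close> t by (auto simp: V'_def)
    then have "sum z ({..<n} - {i, x}) = \<beta> + (sum z V' - z i - z x)"
      using x \<open>i \<in> V'\<close> by (simp add: sum_diff1 z_def V'_def)
    moreover have "adj_sum n E z i \<le> sum z ({..<n} - {i, x})"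
      unfolding adj_sum_eq_sum_nbhd using x z_pos
      by (intro sum_mono2) (auto simp: nbhd_def less_imp_le)
    ultimately have "adj_sum n E z i \<le> \<beta> + (sum z V' - 2 * (1 - \<delta>))"
      using zx by simp
    also have "\<dots> < (real n - 2) * (1 - \<delta>)"
      using sum_V' key small(2) by (simp add: algebra_simps)
    finally show ?thesis
      using zx by simp
  next
    case 4
    then have "i \<in> V'" and full: "\<And>x. x < n \<Longrightarrow> x \<noteq> t \<Longrightarrow> x \<noteq> i \<Longrightarrow> E i x"
      using i by (auto simp: V'_def D_def defective_def)
    then have "\<not> E t i"
      using 4 i by (auto simp: U_def universal_nbrs_def nbhd_def)
    then have "nbhd n E i = V' - {i}"
      using full sym by (auto simp: nbhd_def V'_def)
    then have "adj_sum n E z i = sum z V' - 1"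
      using 4 \<open>i \<in> V'\<close> by (simp add: adj_sum_eq_sum_nbhd sum_diff1 z_def V'_def)
    also have "\<dots> < real n - 2"
      using sum_V' \<epsilon>\<delta>(1,4) by (simp add: algebra_simps)
    finally show ?thesis
      using 4 by (simp add: z_def)
  qed
qed

lemma eigenvalue_less_if_low_vertex:
  assumes t: "t < n" and n: "8 \<le> n" "2 * r * (r + 1) + r < n" and low: "4 * deg n E t < n"
    and few: "card (universal_nbrs n E t) < r" and defects: "2 \<le> card (defective n E t)"
    and ev: "eigenvalue (adj_mat n E) \<mu>"
  shows "\<mu> < real n - 2"
proof -
  let ?U = "universal_nbrs n E t" and ?D = "defective n E t"
  have "real (deg n E t + 1) \<le> real ((r + 1) * card ?D)"
    using deg_add_one_le_card_defective[OF few defects] by (simp only: of_nat_le_iff)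
  moreover have "real (card ?U + 1) \<le> real r" "real 2 \<le> real (card ?D)" "real (4 * deg n E t) < real n"
    "real 8 \<le> real n" "real (2 * r * (r + 1) + r) < real n"
    using few defects low n by (simp_all only: of_nat_le_iff of_nat_less_iff Suc_le_eq)
  ultimately have "real (card ?U) + 1 \<le> real r" "2 \<le> real (card ?D)"
    "real (deg n E t) + 1 \<le> (real r + 1) * real (card ?D)" "4 * real (deg n E t) < real n"
    "8 \<le> real n" "2 * real r * (real r + 1) + real r < real n"
    by (simp_all add: algebra_simps)
  then obtain \<beta> \<epsilon> \<delta> :: real where \<beta>: "\<beta> * (real n - 2) = real (deg n E t) + 1" "0 < \<beta>"
    and \<epsilon>\<delta>: "0 < \<epsilon>" "0 < \<delta>" "\<delta> < 1" "\<delta> * real (card ?D) = \<epsilon> * (real (card ?U) + 1)"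
      "\<beta> < real n * \<epsilon>"
    and key: "\<beta> + \<epsilon> * real (card ?U) + \<delta> * (real n - 2) < 1"
    using low_vertex_weights[OF of_nat_0_le_iff _ _ of_nat_0_le_iff] by metis
  define z where "z = (\<lambda>v. if v = t then \<beta> else if v \<in> ?U then 1 + \<epsilon> else if v \<in> ?D then 1 - \<delta> else 1)"
  have "adj_sum n E z i < (real n - 2) * z i" if "i < n" for i
    unfolding z_def using adj_sum_low_vertex_test_vector_less[OF t _ defects \<beta> \<epsilon>\<delta> key that] n by simp
  moreover have "0 < z v" for v
    using \<beta> \<epsilon>\<delta> by (simp add: z_def)
  ultimately show ?thesis
    using eigenvalue_less_by_test_vector[OF _ _ ev] by blast
qed

lemma graph_iso_H_graph_if_low_vertex:
  assumes t: "t < n" and r: "r \<ge> 1" and n: "8 \<le> n" "2 * r * (r + 1) + r < n"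
    and low: "4 * deg n E t < n"
    and no_clique: "\<not> (\<exists>Q \<subseteq> nbhd n E t. card Q = r \<and> clique E Q)"
    and ev: "eigenvalue (adj_mat n E) \<mu>" and ge: "lambda_max n (H_graph n r) \<le> \<mu>"
  shows "graph_iso n E (H_graph n r)"
proof -
  have "r + 2 \<le> 2 * r * (r + 1) + r"
    using r by (cases r) auto
  then have n_r: "r + 2 \<le> n"
    using n by linarith
  have lambda_H: "real n - 2 \<le> lambda_max n (H_graph n r)"
    by (rule lambda_max_H_graph_ge[OF r n_r])
  show ?thesis
  proof (cases "\<exists>a b. a < n \<and> b < n \<and> a \<noteq> t \<and> b \<noteq> t \<and> a \<noteq> b \<and> \<not> E a b")
    case True
    then obtain a b where ab: "a < n" "b < n" "a \<noteq> t" "b \<noteq> t" "a \<noteq> b" "\<not> E a b"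
      by blast
    then have "{a, b} \<subseteq> defective n E t"
      using sym by (auto simp: defective_def)
    then have "card {a, b} \<le> card (defective n E t)"
      by (rule card_mono[rotated]) (simp add: defective_def)
    then have "2 \<le> card (defective n E t)"
      using ab(5) by simp
    then have "\<mu> < real n - 2"
      using eigenvalue_less_if_low_vertex[OF t n low card_universal_nbrs_less[OF no_clique] _ ev] by blast
    then show ?thesis
      using ge lambda_H by simp
  next
    case False
    then have complete: "\<And>a b. a < n \<Longrightarrow> b < n \<Longrightarrow> a \<noteq> t \<Longrightarrow> b \<noteq> t \<Longrightarrow> a \<noteq> b \<Longrightarrow> E a b"
      by blast
    have "\<not> r \<le> deg n E t"
    proof
      assume "r \<le> deg n E t"
      then obtain Q where "Q \<subseteq> nbhd n E t" "card Q = r"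
        unfolding deg_def by (meson obtain_subset_with_card_n)
      moreover from this have "clique E Q"
        using complete nbhd_subset[of t] unfolding clique_def by blast
      ultimately show False
        using no_clique by blast
    qed
    then consider "deg n E t + 2 \<le> r" | "deg n E t = r - 1"
      by linarith
    then show ?thesis
    proof cases
      case 1
      then have "\<mu> < lambda_max n (H_graph n r)"
        using eigenvalue_less_lambda_max_H_graph[OF t _ n_r complete 1 ev] by simp
      then show ?thesis
        using ge by simp
    next
      case 2
      then show ?thesis
        using graph_iso_H_graph_if_complete_minus_vertex[OF t r _ complete] n_r by simp
    qed
  qed
qed

end

section \<open>Tilings by disjoint cliques\<close>

text \<open>f lists p vertices such that every block of s consecutive indices spans a clique;
  for \<open>p = n = k s\<close> this is a copy of k disjoint \<open>K\<^sub>s\<close>.\<close>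
definition clique_tiling :: "nat \<Rightarrow> (nat \<Rightarrow> nat \<Rightarrow> bool) \<Rightarrow> nat \<Rightarrow> nat \<Rightarrow> (nat \<Rightarrow> nat) \<Rightarrow> bool" where
  "clique_tiling n E s p f \<longleftrightarrow> s dvd p \<and> inj_on f {..<p} \<and> f ` {..<p} \<subseteq> {..<n} \<and>
     (\<forall>i<p. \<forall>j<p. i \<noteq> j \<and> i div s = j div s \<longrightarrow> E (f i) (f j))"

lemma clique_tiling_empty: "clique_tiling n E s 0 f"
  by (simp add: clique_tiling_def)

lemma clique_tiling_le: "clique_tiling n E s p f \<Longrightarrow> p \<le> n"
  unfolding clique_tiling_def by (metis card_image card_lessThan card_mono finite_lessThan)

lemma clique_tiling_of_clique:
  assumes "clique E B" "B \<subseteq> {..<n}" "card B = s"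
  obtains h where "clique_tiling n E s s h" "h ` {..<s} = B"
proof -
  obtain h where h: "bij_betw h {..<s} B"
    using assms(2,3) finite_same_card_bij[of "{..<s}" B] finite_subset by auto
  then have "clique_tiling n E s s h"
    using assms(1,2) by (auto simp: clique_tiling_def bij_betw_def clique_def inj_on_eq_iff)
  then show thesis
    using that h by (simp add: bij_betw_def)
qed

lemma div_diff_mult_self:
  fixes i s c :: nat
  assumes "s * c \<le> i" "s > 0"
  shows "i div s = (i - s * c) div s + c"
proof -
  have "i = (i - s * c) + c * s"
    using assms by simp
  then show ?thesis
    using div_mult_self1[of s "i - s * c" c] assms(2) by simp
qed

lemma lessThan_add_eq_Un_image: "{..<p + m} = {..<p} \<union> (\<lambda>i. i + p) ` {..<m::nat}"
proof -
  have "(\<lambda>i. i + p) ` {..<m} = {p..<p + m}"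
    using image_add_atLeastLessThan[of p 0 m] by (simp add: lessThan_atLeast0 add.commute)
  then show ?thesis
    by (auto simp: lessThan_atLeast0)
qed

lemma clique_tiling_append:
  assumes f: "clique_tiling n E s p f" and g: "clique_tiling n E s m g"
    and disjoint: "f ` {..<p} \<inter> g ` {..<m} = {}" and s: "s > 0"
  defines "h \<equiv> \<lambda>i. if i < p then f i else g (i - p)"
  shows "clique_tiling n E s (p + m) h" "h ` {..<p + m} = f ` {..<p} \<union> g ` {..<m}"
proof -
  obtain c where "p = s * c"
    using f unfolding clique_tiling_def by blast
  then have block: "k < p \<longleftrightarrow> k div s < c" for k
    using s by (simp add: div_less_iff_less_mult mult.commute)
  have "h ` {..<p} = f ` {..<p}"
    by (rule image_cong) (simp_all add: h_def)
  moreover have "h \<circ> (\<lambda>i. i + p) = g"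
    by (simp add: h_def fun_eq_iff)
  ultimately show image: "h ` {..<p + m} = f ` {..<p} \<union> g ` {..<m}"
    by (simp add: lessThan_add_eq_Un_image image_Un image_comp)
  have f_inj: "inj_on f {..<p}" and g_inj: "inj_on g {..<m}"
    using f g by (simp_all add: clique_tiling_def)
  have "h i \<noteq> h j" if ij: "i < p + m" "j < p + m" "i \<noteq> j" for i j
  proof (cases "i < p"; cases "j < p")
    assume "i < p" "j < p"
    then show ?thesis
      using ij f_inj by (simp add: h_def inj_on_eq_iff)
  next
    assume "\<not> i < p" "\<not> j < p"
    then show ?thesis
      using ij g_inj by (simp add: h_def inj_on_eq_iff)
  next
    assume "i < p" "\<not> j < p"
    then have "h i \<in> f ` {..<p}" "h j \<in> g ` {..<m}"
      using ij by (auto simp: h_def)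
    then show ?thesis
      using disjoint unfolding disjoint_iff by metis
  next
    assume "\<not> i < p" "j < p"
    then have "h i \<in> g ` {..<m}" "h j \<in> f ` {..<p}"
      using ij by (auto simp: h_def)
    then show ?thesis
      using disjoint unfolding disjoint_iff by metis
  qed
  then have "inj_on h {..<p + m}"
    by (auto simp: inj_on_def)
  moreover have "E (h i) (h j)" if ij: "i < p + m" "j < p + m" "i \<noteq> j" "i div s = j div s" for i j
  proof (cases "i < p")
    case True
    then have "j < p"
      using ij(4) by (simp add: block)
    then show ?thesis
      using True ij f by (simp add: h_def clique_tiling_def)
  next
    case False
    then have "\<not> j < p"
      using ij(4) by (simp add: block)
    moreover have "(i - p) div s = (j - p) div s"
      using div_diff_mult_self[of s c i] div_diff_mult_self[of s c j] False calculation ij(4) s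
      by (simp add: \<open>p = s * c\<close>)
    ultimately show ?thesis
      using False ij g by (simp add: h_def clique_tiling_def)
  qed
  ultimately show "clique_tiling n E s (p + m) h"
    using f g image by (auto simp: clique_tiling_def)
qed

lemma contains_subgraph_if_clique_tiling:
  assumes "clique_tiling n E s n f" "k * s = n"
  shows "contains_subgraph n E n (disjoint_cliques k s)"
  using assms unfolding contains_subgraph_def clique_tiling_def disjoint_cliques_def
  by (intro exI[of _ f]) auto

text \<open>Greedy: keep any vertex of W and recurse into its neighbours in W, which loses fewer than D
  vertices besides the kept one.\<close>
lemma greedy_clique:
  assumes sym: "\<And>x y. E x y \<longleftrightarrow> E y x"
  shows "finite W \<Longrightarrow> (\<forall>w\<in>W. card {x \<in> W. x \<noteq> w \<and> \<not> E w x} < D) \<Longrightarrow>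
    k * D < card W + D \<Longrightarrow> \<exists>Q \<subseteq> W. card Q = k \<and> clique E Q"
proof (induction k arbitrary: W)
  case 0
  show ?case
    by (rule exI[of _ "{}"]) (simp add: clique_def)
next
  case (Suc k)
  have "card W > k * D"
    using Suc.prems(3) by simp
  then obtain w where w: "w \<in> W"
    by fastforce
  define W' N where "W' = {x \<in> W. x \<noteq> w \<and> E w x}" and "N = {x \<in> W. x \<noteq> w \<and> \<not> E w x}"
  have "W \<subseteq> insert w (W' \<union> N)"
    by (auto simp: W'_def N_def)
  then have "card W \<le> card (insert w (W' \<union> N))"
    by (rule card_mono[rotated]) (use Suc.prems(1) in \<open>auto simp: W'_def N_def\<close>)
  also have "\<dots> \<le> Suc (card (W' \<union> N))"
    by (rule card_insert_le_m1) auto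
  also have "card (W' \<union> N) \<le> card W' + card N"
    by (rule card_Un_le)
  finally have "card W \<le> Suc (card W' + card N)"
    by simp
  moreover have "card N < D"
    using Suc.prems(2) w by (auto simp: N_def)
  ultimately have "k * D < card W' + D"
    using \<open>card W > k * D\<close> by linarith
  moreover have "finite W'"
    using Suc.prems(1) by (simp add: W'_def)
  moreover have "\<forall>v\<in>W'. card {x \<in> W'. x \<noteq> v \<and> \<not> E v x} < D"
  proof
    fix v assume v: "v \<in> W'"
    have "card {x \<in> W'. x \<noteq> v \<and> \<not> E v x} \<le> card {x \<in> W. x \<noteq> v \<and> \<not> E v x}"
      by (rule card_mono) (use Suc.prems(1) in \<open>auto simp: W'_def\<close>)
    then show "card {x \<in> W'. x \<noteq> v \<and> \<not> E v x} < D"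
      using Suc.prems(2) v by (fastforce simp: W'_def)
  qed
  ultimately obtain Q where Q: "Q \<subseteq> W'" "card Q = k" "clique E Q"
    using Suc.IH by blast
  have "w \<notin> Q" "finite Q"
    using Q(1) \<open>finite W'\<close> finite_subset by (auto simp: W'_def)
  moreover have "insert w Q \<subseteq> W" "clique E (insert w Q)"
    using Q(1,3) w sym by (auto simp: clique_def W'_def)
  ultimately show ?case
    using Q(2) by (intro exI[of _ "insert w Q"]) auto
qed

context finite_simple_graph
begin

lemma clique_tiling_add_vertex:
  assumes f: "clique_tiling n E s p f" and s: "s > 0"
    and x: "x < n" "x \<notin> f ` {..<p}"
    and Q: "Q \<subseteq> nbhd n E x" "card Q = s - 1" "clique E Q" "Q \<inter> f ` {..<p} = {}"
  obtains f' where "clique_tiling n E s (p + s) f'" "f' ` {..<p + s} = f ` {..<p} \<union> insert x Q"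
proof -
  have "finite Q" "x \<notin> Q"
    using Q(1) finite_subset[OF _ finite_nbhd] by (auto simp: nbhd_def)
  then have "card (insert x Q) = s"
    using Q(2) s by simp
  moreover have "clique E (insert x Q)" "insert x Q \<subseteq> {..<n}"
    using Q(1,3) x(1) sym by (auto simp: clique_def nbhd_def)
  ultimately obtain h where h: "clique_tiling n E s s h" "h ` {..<s} = insert x Q"
    using clique_tiling_of_clique by metis
  moreover have "f ` {..<p} \<inter> h ` {..<s} = {}"
    using h(2) x(2) Q(4) by auto
  ultimately show thesis
    using that clique_tiling_append[of n E s p f s h] f s by metis
qed

lemma clique_tiling_covering:
  assumes s: "s > 0" and f0: "clique_tiling n E s p0 f0"
    and X: "finite X" "X \<subseteq> {..<n}" and bound: "p0 + s * card X \<le> P"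
    and extend: "\<And>x U. x \<in> X \<Longrightarrow> U \<subseteq> {..<n} \<Longrightarrow> card U \<le> P \<Longrightarrow> x \<notin> U \<Longrightarrow>
      \<exists>Q \<subseteq> nbhd n E x. card Q = s - 1 \<and> clique E Q \<and> Q \<inter> U = {}"
  obtains p f where "clique_tiling n E s p f" "X \<union> f0 ` {..<p0} \<subseteq> f ` {..<p}" "p \<le> p0 + s * card X"
proof -
  have "\<exists>p f. clique_tiling n E s p f \<and> Y \<union> f0 ` {..<p0} \<subseteq> f ` {..<p} \<and> p \<le> p0 + s * card Y"
    if "Y \<subseteq> X" for Y
    using finite_subset[OF that X(1)] that
  proof (induction Y rule: finite_induct)
    case empty
    then show ?case
      using f0 by auto
  next
    case (insert x Y)
    then obtain p f where pf: "clique_tiling n E s p f" "Y \<union> f0 ` {..<p0} \<subseteq> f ` {..<p}"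
      "p \<le> p0 + s * card Y"
      by blast
    show ?case
    proof (cases "x \<in> f ` {..<p}")
      case True
      then show ?thesis
        using pf insert.hyps by (intro exI[of _ p] exI[of _ f]) auto
    next
      case False
      have "card (insert x Y) \<le> card X"
        using insert.prems X(1) by (rule card_mono[rotated])
      then have "p + s \<le> P"
        using pf(3) insert.hyps bound mult_le_mono2[of "card (insert x Y)" "card X" s] by simp
      then have "card (f ` {..<p}) \<le> P"
        using card_image_le[of "{..<p}" f] by simp
      moreover have "f ` {..<p} \<subseteq> {..<n}"
        using pf(1) by (simp add: clique_tiling_def)
      moreover have "x \<in> X"
        using insert.prems by simp
      ultimately obtain Q where "Q \<subseteq> nbhd n E x" "card Q = s - 1" "clique E Q" "Q \<inter> f ` {..<p} = {}"
        using extend[of x "f ` {..<p}"] False by blast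
      moreover have "x < n"
        using \<open>x \<in> X\<close> X(2) by auto
      ultimately obtain f' where "clique_tiling n E s (p + s) f'"
        "f' ` {..<p + s} = f ` {..<p} \<union> insert x Q"
        using clique_tiling_add_vertex[OF pf(1) s _ False] by metis
      then show ?thesis
        using pf(2,3) insert.hyps by (intro exI[of _ "p + s"] exI[of _ f']) auto
    qed
  qed
  then show thesis
    using that by blast
qed

end

definition bad_pairs :: "(nat \<Rightarrow> nat \<Rightarrow> bool) \<Rightarrow> nat \<Rightarrow> nat \<Rightarrow> (nat \<Rightarrow> nat) \<Rightarrow> (nat \<times> nat) set" where
  "bad_pairs E s m g = {(i, j). i < m \<and> j < m \<and> i \<noteq> j \<and> i div s = j div s \<and> \<not> E (g i) (g j)}"

lemma finite_bad_pairs [simp]: "finite (bad_pairs E s m g)"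
  by (rule finite_subset[of _ "{..<m} \<times> {..<m}"]) (auto simp: bad_pairs_def)

lemma card_block_le:
  assumes "s > 0"
  shows "card {j. j < m \<and> j div s = c} \<le> s"
proof -
  have "{j. j < m \<and> j div s = c} \<subseteq> {c * s..<c * s + s}"
  proof
    fix j assume "j \<in> {j. j < m \<and> j div s = c}"
    then have "j = c * s + j mod s"
      by (metis (mono_tags, lifting) div_mult_mod_eq mem_Collect_eq)
    moreover have "j mod s < s"
      using assms by simp
    ultimately show "j \<in> {c * s..<c * s + s}"
      by (metis atLeastLessThan_iff le_add1 add_less_cancel_left)
  qed
  then show ?thesis
    using card_mono[of "{c * s..<c * s + s}"] by fastforce
qed

lemma card_preimage_le:
  assumes "inj_on g {..<m}" "finite A"
  shows "card {i. i < m \<and> g i \<in> A} \<le> card A"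
  by (rule card_inj_on_le[OF inj_on_subset[OF assms(1)] _ assms(2)]) auto

context finite_simple_graph
begin

text \<open>Only the block of q, the non-neighbours of the rest of that block and the blocks meeting the
  non-neighbours of \<open>g q\<close> are excluded, fewer than m positions in all.\<close>
lemma exchange_partner_exists:
  assumes g: "bij_betw g {..<m} S" and S: "S \<subseteq> {..<n}" and s: "s > 0"
    and sparse: "\<And>v. v \<in> S \<Longrightarrow> card (non_nbhd n E v) < D"
    and room: "s + (s - 1) * (D - 1) + s * (D - 1) < m" and q: "q < m"
  obtains q' where "q' < m" "q' div s \<noteq> q div s"
    "\<And>j. j < m \<Longrightarrow> j div s = q div s \<Longrightarrow> j \<noteq> q \<Longrightarrow> E (g q') (g j)"
    "\<And>j. j < m \<Longrightarrow> j div s = q' div s \<Longrightarrow> j \<noteq> q' \<Longrightarrow> E (g q) (g j)"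
proof -
  have inj: "inj_on g {..<m}"
    using g by (simp add: bij_betw_def)
  have g_S: "g i \<in> S" if "i < m" for i
    using g that by (auto dest: bij_betw_apply)
  define X\<^sub>1 where "X\<^sub>1 = {j. j < m \<and> j div s = q div s}"
  define X\<^sub>2 where "X\<^sub>2 = (\<Union>j\<in>X\<^sub>1 - {q}. {i. i < m \<and> g i \<in> non_nbhd n E (g j)})"
  define J where "J = {j. j < m \<and> g j \<in> non_nbhd n E (g q)}"
  define X\<^sub>3 where "X\<^sub>3 = (\<Union>j\<in>J. {i. i < m \<and> i div s = j div s})"
  have few_non_nbrs: "card {i. i < m \<and> g i \<in> non_nbhd n E (g j)} \<le> D - 1" if "j < m" for j
    using card_preimage_le[OF inj finite_non_nbhd, of n E "g j"] sparse[OF g_S[OF that]] by simp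
  have "finite X\<^sub>1" "q \<in> X\<^sub>1"
    using q by (auto simp: X\<^sub>1_def)
  have "card X\<^sub>1 \<le> s"
    unfolding X\<^sub>1_def by (rule card_block_le[OF s])
  moreover have "card X\<^sub>2 \<le> (s - 1) * (D - 1)"
  proof -
    have "card X\<^sub>2 \<le> (\<Sum>j\<in>X\<^sub>1 - {q}. D - 1)"
      unfolding X\<^sub>2_def using \<open>finite X\<^sub>1\<close> few_non_nbrs
      by (intro order_trans[OF card_UN_le] sum_mono) (auto simp: X\<^sub>1_def)
    also have "\<dots> \<le> (s - 1) * (D - 1)"
      using \<open>card X\<^sub>1 \<le> s\<close> \<open>finite X\<^sub>1\<close> \<open>q \<in> X\<^sub>1\<close> by (simp add: diff_le_mono)
    finally show ?thesis .
  qed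
  moreover have "card X\<^sub>3 \<le> s * (D - 1)"
  proof -
    have "card X\<^sub>3 \<le> (\<Sum>j\<in>J. s)"
      unfolding X\<^sub>3_def using card_block_le[OF s]
      by (intro order_trans[OF card_UN_le] sum_mono) (auto simp: J_def)
    also have "\<dots> \<le> s * (D - 1)"
      using few_non_nbrs[OF q] by (simp add: J_def)
    finally show ?thesis .
  qed
  ultimately have "card (X\<^sub>1 \<union> X\<^sub>2 \<union> X\<^sub>3) < card {..<m}"
    using room card_Un_le[of "X\<^sub>1 \<union> X\<^sub>2" X\<^sub>3] card_Un_le[of X\<^sub>1 X\<^sub>2] by simp
  moreover have "finite (X\<^sub>1 \<union> X\<^sub>2 \<union> X\<^sub>3)"
    by (rule finite_subset[of _ "{..<m}"]) (auto simp: X\<^sub>1_def X\<^sub>2_def X\<^sub>3_def)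
  ultimately have "\<not> {..<m} \<subseteq> X\<^sub>1 \<union> X\<^sub>2 \<union> X\<^sub>3"
    using card_mono by (metis not_le)
  then obtain q' where q': "q' < m" "q' \<notin> X\<^sub>1" "q' \<notin> X\<^sub>2" "q' \<notin> X\<^sub>3"
    by blast
  have other_block: "q' div s \<noteq> q div s"
    using q' by (simp add: X\<^sub>1_def)
  have adj_q': "E (g q') (g j)" if "j < m" "j div s = q div s" "j \<noteq> q" for j
  proof -
    have "j \<in> X\<^sub>1 - {q}"
      using that by (simp add: X\<^sub>1_def)
    then have "g q' \<notin> non_nbhd n E (g j)"
      using q'(1,3) unfolding X\<^sub>2_def by blast
    moreover have "g q' \<noteq> g j"
      using inj_on_eq_iff[OF inj, of q' j] q'(1) that other_block by auto
    ultimately have "E (g j) (g q')"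
      using g_S[OF q'(1)] S by (auto simp: non_nbhd_def)
    then show ?thesis
      using sym[of "g j" "g q'"] by simp
  qed
  have adj_q: "E (g q) (g j)" if "j < m" "j div s = q' div s" "j \<noteq> q'" for j
  proof -
    have "j \<notin> J"
    proof
      assume "j \<in> J"
      then have "q' \<in> X\<^sub>3"
        using q'(1) that(2) by (auto simp: X\<^sub>3_def intro!: bexI[of _ j])
      then show False
        using q'(4) by simp
    qed
    then have "g j \<notin> non_nbhd n E (g q)"
      using that(1) by (simp add: J_def)
    moreover have "g j \<noteq> g q"
      using inj_on_eq_iff[OF inj, of j q] q that other_block by auto
    ultimately show ?thesis
      using g_S[OF that(1)] S by (auto simp: non_nbhd_def)
  qed
  show thesis
    using that q' other_block adj_q' adj_q by blast
qed

text \<open>Exchanging the vertices at a position q of a non-edge inside a block and at its exchange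
  partner removes that non-edge and creates no new one.\<close>
lemma swap_reduces_bad_pairs:
  assumes g: "bij_betw g {..<m} S" and S: "S \<subseteq> {..<n}" and s: "s > 0"
    and sparse: "\<And>v. v \<in> S \<Longrightarrow> card (non_nbhd n E v) < D"
    and room: "s + (s - 1) * (D - 1) + s * (D - 1) < m"
    and bad: "(q, q\<^sub>2) \<in> bad_pairs E s m g"
  obtains g' where "bij_betw g' {..<m} S" "card (bad_pairs E s m g') < card (bad_pairs E s m g)"
proof -
  have q: "q < m"
    using bad by (simp add: bad_pairs_def)
  obtain q' where q': "q' < m" and other_block: "q' div s \<noteq> q div s"
    and adj_q': "\<And>j. j < m \<Longrightarrow> j div s = q div s \<Longrightarrow> j \<noteq> q \<Longrightarrow> E (g q') (g j)"
    and adj_q: "\<And>j. j < m \<Longrightarrow> j div s = q' div s \<Longrightarrow> j \<noteq> q' \<Longrightarrow> E (g q) (g j)"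
    using exchange_partner_exists[OF g S s sparse room q] by blast
  define g' where "g' = g \<circ> Transposition.transpose q q'"
  have g': "bij_betw g' {..<m} S"
    using g q q' by (simp add: g'_def bij_betw_swap_iff)
  have "bad_pairs E s m g' \<subseteq> bad_pairs E s m g - {(q, q\<^sub>2)}"
  proof
    fix x assume "x \<in> bad_pairs E s m g'"
    then obtain i j where x: "x = (i, j)" and ij: "i < m" "j < m" "i \<noteq> j" "i div s = j div s"
      and non_edge: "\<not> E (g' i) (g' j)"
      by (auto simp: bad_pairs_def)
    have "i \<noteq> q"
    proof
      assume "i = q"
      then have "j \<noteq> q'"
        using ij other_block by auto
      then have "g' i = g q'" "g' j = g j"
        using \<open>i = q\<close> ij by (auto simp: g'_def)
      then show False
        using adj_q'[of j] ij \<open>i = q\<close> non_edge by auto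
    qed
    moreover have "j \<noteq> q"
    proof
      assume "j = q"
      then have "i \<noteq> q'"
        using ij other_block by auto
      then have "g' j = g q'" "g' i = g i"
        using \<open>j = q\<close> ij by (auto simp: g'_def)
      then show False
        using adj_q'[of i] ij \<open>j = q\<close> non_edge sym[of "g q'" "g i"] by auto
    qed
    moreover have "i \<noteq> q'"
    proof
      assume "i = q'"
      then have "j \<noteq> q"
        using ij other_block by auto
      then have "g' i = g q" "g' j = g j"
        using \<open>i = q'\<close> ij by (auto simp: g'_def)
      then show False
        using adj_q[of j] ij \<open>i = q'\<close> non_edge by auto
    qed
    moreover have "j \<noteq> q'"
    proof
      assume "j = q'"
      then have "i \<noteq> q"
        using ij other_block by auto
      then have "g' j = g q" "g' i = g i"
        using \<open>j = q'\<close> ij by (auto simp: g'_def)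
      then show False
        using adj_q[of i] ij \<open>j = q'\<close> non_edge sym[of "g q" "g i"] by auto
    qed
    ultimately have "g' i = g i" "g' j = g j"
      by (simp_all add: g'_def)
    then show "x \<in> bad_pairs E s m g - {(q, q\<^sub>2)}"
      using x ij non_edge \<open>i \<noteq> q\<close> by (simp add: bad_pairs_def)
  qed
  then have "card (bad_pairs E s m g') \<le> card (bad_pairs E s m g - {(q, q\<^sub>2)})"
    by (simp add: card_mono)
  also have "\<dots> < card (bad_pairs E s m g)"
    by (rule card_Diff1_less[OF finite_bad_pairs bad])
  finally show thesis
    using that g' by blast
qed

lemma clique_tiling_of_dense_set:
  assumes S: "S \<subseteq> {..<n}" and s: "s > 0" "s dvd card S"
    and dense: "\<And>v. v \<in> S \<Longrightarrow> card (non_nbhd n E v) < D"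
    and room: "s + (s - 1) * (D - 1) + s * (D - 1) < card S"
  obtains g where "clique_tiling n E s (card S) g" "g ` {..<card S} = S"
proof -
  have "finite S"
    using S finite_subset by blast
  then obtain g0 where "bij_betw g0 {..<card S} S"
    using finite_same_card_bij[of "{..<card S}" S] by auto
  then obtain g where g: "bij_betw g {..<card S} S"
    and least: "\<And>g'. bij_betw g' {..<card S} S \<Longrightarrow>
      card (bad_pairs E s (card S) g) \<le> card (bad_pairs E s (card S) g')"
    using ex_has_least_nat[of "\<lambda>g. bij_betw g {..<card S} S" g0 "\<lambda>g. card (bad_pairs E s (card S) g)"]
    by blast
  have "bad_pairs E s (card S) g = {}"
  proof (rule ccontr)
    assume "bad_pairs E s (card S) g \<noteq> {}"
    then obtain q q\<^sub>2 where "(q, q\<^sub>2) \<in> bad_pairs E s (card S) g"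
      by auto
    then obtain g' where "bij_betw g' {..<card S} S"
      "card (bad_pairs E s (card S) g') < card (bad_pairs E s (card S) g)"
      using swap_reduces_bad_pairs[OF g S s(1) dense room] by blast
    then show False
      using least by (simp add: not_le[symmetric])
  qed
  then have "clique_tiling n E s (card S) g"
    using g S s(2) by (auto simp: clique_tiling_def bad_pairs_def bij_betw_def)
  then show thesis
    using that g by (simp add: bij_betw_def)
qed

lemma clique_in_nbhd_avoiding:
  assumes s: "2 \<le> s" and "finite U"
    and L: "L = {v. v < n \<and> D \<le> card (non_nbhd n E v)}"
    and big: "(s - 2) * D + 1 + card U + card L \<le> deg n E u"
  shows "\<exists>Q \<subseteq> nbhd n E u. card Q = s - 1 \<and> clique E Q \<and> Q \<inter> U = {}"
proof -
  define W where "W = nbhd n E u - U - L"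
  have "card (nbhd n E u) - card U - card L \<le> card W"
    unfolding W_def using diff_card_le_card_Diff[OF \<open>finite U\<close>, of "nbhd n E u"]
      diff_card_le_card_Diff[of L "nbhd n E u - U"] by (simp add: L)
  then have "(s - 1) * D < card W + D"
    using big s by (simp add: deg_def algebra_simps)
  moreover have "card {x \<in> W. x \<noteq> w \<and> \<not> E w x} < D" if "w \<in> W" for w
  proof -
    have "card {x \<in> W. x \<noteq> w \<and> \<not> E w x} \<le> card (non_nbhd n E w)"
      by (rule card_mono) (auto simp: non_nbhd_def W_def nbhd_def)
    also have "\<dots> < D"
      using that by (auto simp: W_def L nbhd_def)
    finally show ?thesis .
  qed
  ultimately obtain Q where "Q \<subseteq> W" "card Q = s - 1" "clique E Q"
    using greedy_clique[of E W D "s - 1"] sym by (auto simp: W_def)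
  then show ?thesis
    by (auto simp: W_def)
qed

lemma clique_tiling_covering_sparse_vertices:
  assumes s: "2 \<le> s"
    and L: "L = {v. v < n \<and> D \<le> card (non_nbhd n E v)}"
    and low_unique: "\<And>u w. u < n \<Longrightarrow> w < n \<Longrightarrow> 4 * deg n E u < n \<Longrightarrow> 4 * deg n E w < n \<Longrightarrow> u = w"
    and low_clique: "\<And>t. t < n \<Longrightarrow> 4 * deg n E t < n \<Longrightarrow> \<exists>Q \<subseteq> nbhd n E t. card Q = s - 1 \<and> clique E Q"
    and greedy_room: "4 * ((s - 2) * D + 1 + card L + (s + s * card L)) \<le> n"
  obtains p f where "clique_tiling n E s p f" "L \<subseteq> f ` {..<p}" "p \<le> s + s * card L"
proof -
  define T where "T = {t. t < n \<and> 4 * deg n E t < n}"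
  define P where "P = s + s * card L"
  have s_pos: "s > 0"
    using s by simp
  obtain p\<^sub>0 f\<^sub>0 where f\<^sub>0: "clique_tiling n E s p\<^sub>0 f\<^sub>0" "T \<subseteq> f\<^sub>0 ` {..<p\<^sub>0}" "p\<^sub>0 \<le> s"
  proof (cases "T = {}")
    case True
    then show thesis
      using that[OF clique_tiling_empty[of n E s id]] by simp
  next
    case False
    then obtain t where t: "t < n" "4 * deg n E t < n"
      by (auto simp: T_def)
    then have "T = {t}"
      using low_unique by (auto simp: T_def)
    obtain Q where "Q \<subseteq> nbhd n E t" "card Q = s - 1" "clique E Q"
      using low_clique[OF t] by blast
    then obtain f where "clique_tiling n E s (0 + s) f" "f ` {..<0 + s} = id ` {..<0} \<union> insert t Q"
      using clique_tiling_add_vertex[OF clique_tiling_empty s_pos t(1)]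
      by (metis empty_iff image_empty inf_bot_right lessThan_0)
    then show thesis
      using that[of s f] \<open>T = {t}\<close> by auto
  qed
  have "(s - 2) * D + 1 + card U + card L \<le> deg n E x" if "x \<in> L - T" "card U \<le> P" for x U
    using that greedy_room by (auto simp: T_def L P_def)
  then have extend: "\<exists>Q \<subseteq> nbhd n E x. card Q = s - 1 \<and> clique E Q \<and> Q \<inter> U = {}"
    if "x \<in> L - T" "U \<subseteq> {..<n}" "card U \<le> P" "x \<notin> U" for x U
    using clique_in_nbhd_avoiding[OF s _ L] that finite_subset[of U "{..<n}"] by blast
  have fin_L: "finite L"
    by (simp add: L)
  have bound: "p\<^sub>0 + s * card (L - T) \<le> P"
    unfolding P_def using f\<^sub>0(3) mult_le_mono2[OF card_mono[OF fin_L Diff_subset[of L T]], of s] by linarith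
  have "finite (L - T)" "L - T \<subseteq> {..<n}"
    by (auto simp: L)
  then obtain p f where f: "clique_tiling n E s p f" "L - T \<union> f\<^sub>0 ` {..<p\<^sub>0} \<subseteq> f ` {..<p}"
    and p: "p \<le> p\<^sub>0 + s * card (L - T)"
    using clique_tiling_covering[OF s_pos f\<^sub>0(1) _ _ bound extend] by blast
  have "L \<subseteq> f ` {..<p}"
    using f(2) f\<^sub>0(2) by blast
  moreover have "p \<le> s + s * card L"
    using p bound by (simp add: P_def)
  ultimately show thesis
    using that f(1) by blast
qed

text \<open>Once the vertices with many non-neighbours are covered, the remaining vertices are all
  dense, and they are tiled by exchanging vertices between blocks.\<close>
lemma contains_disjoint_cliques:
  assumes s: "2 \<le> s" "s dvd n"
    and L: "L = {v. v < n \<and> D \<le> card (non_nbhd n E v)}"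
    and low_unique: "\<And>u w. u < n \<Longrightarrow> w < n \<Longrightarrow> 4 * deg n E u < n \<Longrightarrow> 4 * deg n E w < n \<Longrightarrow> u = w"
    and low_clique: "\<And>t. t < n \<Longrightarrow> 4 * deg n E t < n \<Longrightarrow> \<exists>Q \<subseteq> nbhd n E t. card Q = s - 1 \<and> clique E Q"
    and greedy_room: "4 * ((s - 2) * D + 1 + card L + (s + s * card L)) \<le> n"
    and swap_room: "s + (s - 1) * (D - 1) + s * (D - 1) + (s + s * card L) < n"
  shows "contains_subgraph n E n (disjoint_cliques (n div s) s)"
proof -
  obtain p f where f: "clique_tiling n E s p f" "L \<subseteq> f ` {..<p}" and p: "p \<le> s + s * card L"
    using clique_tiling_covering_sparse_vertices[OF s(1) L low_unique low_clique greedy_room] by blast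
  define S where "S = {..<n} - f ` {..<p}"
  have "inj_on f {..<p}" "f ` {..<p} \<subseteq> {..<n}" "s dvd p" "p \<le> n"
    using f(1) clique_tiling_le by (auto simp: clique_tiling_def)
  then have card_S: "card S = n - p"
    by (simp add: S_def card_Diff_subset card_image)
  have dense: "card (non_nbhd n E v) < D" if "v \<in> S" for v
    using that f(2) by (auto simp: S_def L)
  have "s dvd card S"
    using s(2) \<open>s dvd p\<close> by (simp add: card_S)
  moreover have "s + (s - 1) * (D - 1) + s * (D - 1) < card S"
    using swap_room p by (simp add: card_S)
  ultimately obtain g where g: "clique_tiling n E s (card S) g" "g ` {..<card S} = S"
    using clique_tiling_of_dense_set[of S s D] dense s by (auto simp: S_def)
  have "f ` {..<p} \<inter> S = {}"
    by (auto simp: S_def)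
  then have "clique_tiling n E s (p + card S) (\<lambda>i. if i < p then f i else g (i - p))"
    using clique_tiling_append(1)[OF f(1) g(1)] g(2) s by simp
  moreover have "p + card S = n" "n div s * s = n"
    using \<open>p \<le> n\<close> s(2) by (simp_all add: card_S)
  ultimately show ?thesis
    using contains_subgraph_if_clique_tiling by metis
qed

end

lemma tiling_room:
  fixes s n D l :: nat
  assumes s: "2 \<le> s" and n: "400 * s * s \<le> n" and D: "D = n div (8 * s)"
    and l: "l * (D - 1) \<le> n - 2"
  shows "4 * ((s - 2) * D + 1 + l + (s + s * l)) \<le> n"
    "s + (s - 1) * (D - 1) + s * (D - 1) + (s + s * l) < n"
proof -
  have "n div (8 * s) * (8 * s) \<le> n"
    by (rule div_times_less_eq_dividend)
  then have sD: "8 * (s * D) \<le> n"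
    by (simp add: D algebra_simps)
  have "n mod (8 * s) < 8 * s"
    using s by simp
  then have n_less: "n < 8 * s * (D + 1)"
    using div_mult_mod_eq[of n "8 * s"] by (simp add: D algebra_simps)
  have "50 * s \<le> D"
  proof (rule ccontr)
    assume "\<not> 50 * s \<le> D"
    then have "8 * s * (D + 1) \<le> 8 * s * (50 * s)"
      by (intro mult_le_mono2) simp
    then show False
      using n n_less by (simp add: algebra_simps)
  qed
  have "l < 16 * s"
  proof (rule ccontr)
    assume "\<not> l < 16 * s"
    then have "16 * s * (D - 1) \<le> l * (D - 1)"
      by (intro mult_le_mono1) simp
    moreover have "8 * s * (D + 1) \<le> 8 * s * (2 * (D - 1))"
      using \<open>50 * s \<le> D\<close> s by (intro mult_le_mono2) simp
    moreover have "8 * s * (2 * (D - 1)) = 16 * s * (D - 1)"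
      by simp
    ultimately show False
      using l n_less by linarith
  qed
  then have "s * l \<le> 16 * (s * s)"
    by simp
  moreover have "4 \<le> s * s" "2 * s \<le> s * s"
    using mult_le_mono[OF s s] s by simp_all
  moreover have "(s - 2) * D \<le> s * D" "(s - 1) * (D - 1) \<le> s * D" "s * (D - 1) \<le> s * D"
    by (simp_all add: mult_le_mono)
  moreover have "400 * (s * s) \<le> n"
    using n by (simp add: mult.assoc)
  ultimately have bounds: "s * l \<le> 16 * (s * s)" "4 \<le> s * s" "2 * s \<le> s * s"
    "(s - 2) * D \<le> s * D" "(s - 1) * (D - 1) \<le> s * D" "s * (D - 1) \<le> s * D" "400 * (s * s) \<le> n"
    by blast+
  have "4 * (X + 1 + l + (s + Y)) \<le> n"
    if "X \<le> Z" "8 * Z \<le> n" "Y \<le> 16 * W" "2 * s \<le> W" "4 \<le> W" "400 * W \<le> n" for X Y Z W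
    using that \<open>l < 16 * s\<close> by (simp add: algebra_simps)
  then show "4 * ((s - 2) * D + 1 + l + (s + s * l)) \<le> n"
    using bounds sD by blast
  have "s + A + B + (s + Y) < n"
    if "A \<le> Z" "B \<le> Z" "8 * Z \<le> n" "Y \<le> 16 * W" "2 * s \<le> W" "4 \<le> W" "400 * W \<le> n" for A B Y Z W
    using that \<open>l < 16 * s\<close> by (simp add: algebra_simps)
  then show "s + (s - 1) * (D - 1) + s * (D - 1) + (s + s * l) < n"
    using bounds sD by blast
qed

context finite_simple_graph
begin

lemma graph_iso_H_graph_if_lambda_max_ge:
  assumes r: "r \<ge> 1" and n: "400 * (r + 1) * (r + 1) \<le> n" and dvd: "(r + 1) dvd n"
    and no_tiling: "\<not> contains_subgraph n E n (disjoint_cliques (n div (r + 1)) (r + 1))"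
    and ge: "lambda_max n (H_graph n r) \<le> lambda_max n E"
  shows "graph_iso n E (H_graph n r)"
proof -
  define s where "s = r + 1"
  have s: "2 \<le> s" "400 * s * s \<le> n"
    using r n by (simp_all add: s_def)
  then have "4 \<le> s * s"
    using mult_le_mono[OF s(1) s(1)] by simp
  then have n_big: "1600 \<le> n" "2 * r * (r + 1) + r < n"
    using s n by (auto simp: s_def algebra_simps)
  have ev: "eigenvalue (adj_mat n E) (lambda_max n E)"
    using eigenvalue_lambda_max n_big by simp
  have "real n - 2 \<le> lambda_max n (H_graph n r)"
    using lambda_max_H_graph_ge[OF r] n_big by simp
  then have mu: "real n - 2 \<le> lambda_max n E"
    using ge by simp
  show ?thesis
  proof (cases "\<exists>t<n. 4 * deg n E t < n \<and> \<not> (\<exists>Q \<subseteq> nbhd n E t. card Q = r \<and> clique E Q)")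
    case True
    then show ?thesis
      using graph_iso_H_graph_if_low_vertex[OF _ r _ n_big(2) _ _ ev ge] n_big(1) by auto
  next
    case False
    define D where "D = n div (8 * s)"
    define L where "L = {v. v < n \<and> D \<le> card (non_nbhd n E v)}"
    have "card L * (D - 1) \<le> n - 2"
      using card_many_non_nbrs[OF ev mu] n_big by (simp add: L_def)
    note room = tiling_room[OF s D_def this]
    have "contains_subgraph n E n (disjoint_cliques (n div s) s)"
    proof (rule contains_disjoint_cliques[OF s(1) _ L_def _ _ room])
      show "s dvd n"
        using dvd by (simp add: s_def)
      show "u = w" if "u < n" "w < n" "4 * deg n E u < n" "4 * deg n E w < n" for u w
        using low_deg_vertex_unique[OF ev mu _ that] n_big by simp
      show "\<exists>Q \<subseteq> nbhd n E t. card Q = s - 1 \<and> clique E Q" if "t < n" "4 * deg n E t < n" for t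
        using False that by (auto simp: s_def)
    qed
    then show ?thesis
      using no_tiling by (simp add: s_def)
  qed
qed

end


theorem theorem5p5:
  fixes r :: nat
  assumes "r \<ge> 1"
  shows "\<exists>n0. \<forall>n \<ge> n0. (r + 1) dvd n \<longrightarrow>
     (\<forall>G. simple_graph n G \<and>
          \<not> contains_subgraph n G n (disjoint_cliques (n div (r + 1)) (r + 1)) \<longrightarrow>
          lambda_max n G \<le> lambda_max n (H_graph n r) \<and>
          (lambda_max n G = lambda_max n (H_graph n r) \<longleftrightarrow> graph_iso n G (H_graph n r)))"
proof (intro exI[of _ "400 * (r + 1) * (r + 1)"] allI impI conjI)
  fix n G
  assume n: "400 * (r + 1) * (r + 1) \<le> n" and dvd: "(r + 1) dvd n"
    and G: "simple_graph n G \<and> \<not> contains_subgraph n G n (disjoint_cliques (n div (r + 1)) (r + 1))"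
  interpret finite_simple_graph n G
    using G by unfold_locales simp
  have iso_if_ge: "lambda_max n (H_graph n r) \<le> lambda_max n G \<Longrightarrow> graph_iso n G (H_graph n r)"
    using graph_iso_H_graph_if_lambda_max_ge[OF assms n dvd] G by blast
  then show "lambda_max n G \<le> lambda_max n (H_graph n r)"
    using lambda_max_graph_iso by force
  show "lambda_max n G = lambda_max n (H_graph n r) \<longleftrightarrow> graph_iso n G (H_graph n r)"
    using iso_if_ge lambda_max_graph_iso by auto
qed

end
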